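(* Let $E$ be a separable metric space, $\mu$ a probability measure on $\mathcal{B}(E)$, and $S : E \to E$ Borel measurable. Let $\Pi \subset \mathcal{B}(E)$ be a $\pi$-system such that $\sigma(\Pi) = \mathcal{B}(E)$. Assume that 1. for every $A, B \in \Pi$, $$\lim_{k\to\infty}\sup_{i \in \mathbb{N}} \left|\mu(S^{-i}A \cap S^{-k}S^{-i}B) - \mu(S^{-i}A)\,\mu(S^{-k}S^{-i}B)\right| = 0,$$ and 2. $(E, \mathcal{B}(E), \mu, S)$ is asymptotically stationary with stationary limit $\nu$. For every $n \in \mathbb{N}$ define $\mu_n : \mathcal{B}(E^n) \to [0,1]$ by $$\mu_n(A) = \frac{1}{n!} \sum_{\sigma \in \Sigma_n} \mu\{x \in E : (S^{\sigma(1)}(x), \dots, S^{\sigma(n)}(x)) \in A\}.$$ Then $(\mu_n)_{n \in \mathbb{N}}$ is $\nu$-chaotic.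
   Context: $\mathcal{B}(E)$ is the Borel $\sigma$-algebra. $S^k$ is the $k$-fold composition of $S$, $S^{-k}A=(S^k)^{-1}(A)$; $\Sigma_n$ is the set of permutations of $\{1,\dots,n\}$; $\mathbb{N}=\{1,2,\dots\}$. $(E,\mathcal{B}(E),\mu,S)$ is asymptotically stationary with stationary limit $\nu$ if $\nu(A)=\lim_{k\to\infty}\mu(S^{-k}A)$ exists for every $A\in\mathcal{B}(E)$. $C_b(E)$ denotes bounded continuous scalar-valued functions on $E$. A Borel probability measure $\mu_n$ on $E^n$ is symmetric if $\int_{E^n}\phi_1(x_1)\cdots\phi_n(x_n)\,d\mu_n = \int_{E^n}\phi_1(x_{\pi(1)})\cdots\phi_n(x_{\pi(n)})\,d\mu_n$ for all $\phi_i\in C_b(E)$ and all permutations $\pi$. A sequence of symmetric Borel probability measures $\mu_n$ on $E^n$ is $\nu$-chaotic if for all $k\ge1$ and $\phi_1,\dots,\phi_k\in C_b(E)$, $\lim_{n\to\infty}\int_{E^n}\phi_1(x_1)\cdots\phi_k(x_k)\,d\mu_n=\prod_{j=1}^k\int_E\phi_j\,d\nu$. *)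

theory Defs
  imports "HOL-Probability.Probability"
begin

definition asymptotically_stationary ::
    "'a::topological_space measure \<Rightarrow> ('a \<Rightarrow> 'a) \<Rightarrow> 'a measure \<Rightarrow> bool" where
  "asymptotically_stationary \<mu> S \<nu> \<longleftrightarrow>
     sets \<nu> = sets borel \<and>
     (\<forall>A \<in> sets borel. (\<lambda>k. emeasure \<mu> ((S ^^ k) -` A)) \<longlonglongrightarrow> emeasure \<nu> A)"

definition bcont :: "('a::topological_space \<Rightarrow> real) \<Rightarrow> bool" where
  "bcont \<phi> \<longleftrightarrow> continuous_on UNIV \<phi> \<and> bounded (range \<phi>)"

definition Epow :: "nat \<Rightarrow> (nat \<Rightarrow> 'a::topological_space) measure" where
  "Epow n = PiM {1..n} (\<lambda>_. borel)"

definition symmetric_meas :: "nat \<Rightarrow> (nat \<Rightarrow> 'a::topological_space) measure \<Rightarrow> bool" where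
  "symmetric_meas n m \<longleftrightarrow>
     sets m = sets (Epow n) \<and> prob_space m \<and>
     (\<forall>\<phi> :: nat \<Rightarrow> 'a \<Rightarrow> real. \<forall>\<pi>. (\<forall>i. bcont (\<phi> i)) \<and> \<pi> permutes {1..n} \<longrightarrow>
        (\<integral>x. (\<Prod>i\<in>{1..n}. \<phi> i (x i)) \<partial>m) = (\<integral>x. (\<Prod>i\<in>{1..n}. \<phi> i (x (\<pi> i))) \<partial>m))"

text \<open>nu-chaotic sequence (indexed by n \<ge> 1; the value at n = 0 is irrelevant).\<close>
definition chaotic :: "(nat \<Rightarrow> (nat \<Rightarrow> 'a::topological_space) measure) \<Rightarrow> 'a measure \<Rightarrow> bool" where
  "chaotic ms \<nu> \<longleftrightarrow>
     (\<forall>n\<ge>1. symmetric_meas n (ms n)) \<and>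
     (\<forall>k\<ge>1. \<forall>\<phi> :: nat \<Rightarrow> 'a \<Rightarrow> real. (\<forall>j. bcont (\<phi> j)) \<longrightarrow>
        (\<lambda>n. \<integral>x. (\<Prod>j\<in>{1..k}. \<phi> j (x j)) \<partial>ms n) \<longlonglongrightarrow> (\<Prod>j\<in>{1..k}. \<integral>y. \<phi> j y \<partial>\<nu>))"

definition mu_n :: "'a::topological_space measure \<Rightarrow> ('a \<Rightarrow> 'a) \<Rightarrow> nat \<Rightarrow> (nat \<Rightarrow> 'a) measure" where
  "mu_n \<mu> S n = measure_of (space (Epow n)) (sets (Epow n))
     (\<lambda>A. ennreal (1 / fact n) *
        (\<Sum>\<sigma>\<in>{\<sigma>. \<sigma> permutes {1..n}}.
           emeasure \<mu> {x \<in> space \<mu>. (\<lambda>j\<in>{1..n}. (S ^^ \<sigma> j) x) \<in> A}))"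

end

theory Submission
  imports Defs
begin

text \<open>
  Write \<open>A\<^sub>n f = (f \<circ> S + \<dots> + f \<circ> S\<^sup>n) / n\<close> for the Birkhoff averages. For indicators of
  sets in the \<open>\<pi>\<close>-system, the covariance of \<open>f \<circ> S\<^sup>a\<close> and \<open>g \<circ> S\<^sup>b\<close> under \<open>\<mu>\<close> is bounded by the
  mixing rate at lag \<open>b - a\<close>, so the normalised sum of these covariances over \<open>a < b \<le> n\<close> vanishes.
  Dynkin's argument extends this to all Borel sets (the sums are dominated by Cesaro means of
  \<open>\<mu>(S\<^sup>-\<^sup>a A)\<close>, which converge to \<open>\<nu>(A)\<close>), and uniform approximation to bounded Borel functions.
  Together with asymptotic stationarity this gives \<open>A\<^sub>n f \<longrightarrow> \<integral>f d\<nu>\<close> in \<open>L\<^sup>2(\<mu>)\<close>.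

  The measure \<open>\<mu>\<^sub>n\<close> is the law of \<open>(S\<^bsup>\<sigma>(1)\<^esup>x, \<dots>, S\<^bsup>\<sigma>(n)\<^esup>x)\<close> for \<open>x\<close> drawn from \<open>\<mu>\<close> and an
  independent uniform permutation \<open>\<sigma>\<close>. It is therefore exchangeable, and the average of \<open>\<psi>\<close>
  over its \<open>n\<close> coordinates has the law of \<open>A\<^sub>n \<psi>\<close>. By exchangeability, the factor \<open>\<psi>(y\<^bsub>k+1\<^esub>)\<close>
  in \<open>\<integral>\<phi>\<^sub>1(y\<^sub>1)\<cdots>\<phi>\<^sub>k(y\<^sub>k)\<psi>(y\<^bsub>k+1\<^esub>) d\<mu>\<^sub>n\<close> may be replaced by that coordinate average at a cost
  \<open>O(k/n)\<close>, and then by \<open>\<integral>\<psi> d\<nu>\<close> at a cost controlled by the \<open>L\<^sup>1(\<mu>)\<close> distance of \<open>A\<^sub>n \<psi>\<close> from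
  \<open>\<integral>\<psi> d\<nu>\<close>. Induction on \<open>k\<close> gives chaoticity.
\<close>

lemma tendsto_zero_by_approximate_bounds:
  fixes X :: "nat \<Rightarrow> real"
  assumes "\<And>e. 0 < e \<Longrightarrow> \<exists>u l. u \<longlonglongrightarrow> l \<and> l < e \<and> (\<forall>\<^sub>F n in sequentially. \<bar>X n\<bar> \<le> u n)"
  shows "X \<longlonglongrightarrow> 0"
proof (rule tendstoI)
  fix e :: real assume "0 < e"
  then obtain u l where u: "u \<longlonglongrightarrow> l" "l < e" and X: "\<forall>\<^sub>F n in sequentially. \<bar>X n\<bar> \<le> u n"
    using assms by blast
  from u have "\<forall>\<^sub>F n in sequentially. u n < e" by (rule order_tendstoD(2))
  with X show "\<forall>\<^sub>F n in sequentially. dist (X n) 0 < e"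
    by eventually_elim auto
qed

lemma cesaro_mean_tendsto:
  fixes X :: "nat \<Rightarrow> real"
  assumes "X \<longlonglongrightarrow> c"
  shows "(\<lambda>n. (\<Sum>a\<in>{1..n}. X a) / n) \<longlonglongrightarrow> c"
proof (rule LIM_zero_cancel, rule tendsto_zero_by_approximate_bounds)
  fix e :: real assume "0 < e"
  then obtain N where N: "\<And>a. N \<le> a \<Longrightarrow> \<bar>X a - c\<bar> < e / 2"
    using LIMSEQ_D[OF assms, of "e / 2"] by auto
  define K where "K = (\<Sum>a\<in>{1..N}. \<bar>X a - c\<bar>)"
  have "\<bar>(\<Sum>a\<in>{1..n}. X a) / n - c\<bar> \<le> K / n + e / 2" if "N < n" for n
  proof -
    have "{1..n} = {1..N} \<union> {Suc N..n}" using that by auto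
    then have "(\<Sum>a\<in>{1..n}. X a - c) = (\<Sum>a\<in>{1..N}. X a - c) + (\<Sum>a\<in>{Suc N..n}. X a - c)"
      by (simp add: sum.union_disjoint)
    moreover have "\<bar>\<Sum>a\<in>{1..N}. X a - c\<bar> \<le> K" unfolding K_def by (rule sum_abs)
    moreover have "\<bar>\<Sum>a\<in>{Suc N..n}. X a - c\<bar> \<le> n * (e / 2)"
    proof -
      have "\<bar>\<Sum>a\<in>{Suc N..n}. X a - c\<bar> \<le> (\<Sum>a\<in>{Suc N..n}. e / 2)"
        using N by (intro order_trans[OF sum_abs] sum_mono) (auto intro: less_imp_le)
      also have "\<dots> \<le> n * (e / 2)" using \<open>0 < e\<close> by simp
      finally show ?thesis .
    qed
    ultimately have "\<bar>\<Sum>a\<in>{1..n}. X a - c\<bar> \<le> K + n * (e / 2)" by linarith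
    moreover have "(\<Sum>a\<in>{1..n}. X a) / n - c = (\<Sum>a\<in>{1..n}. X a - c) / n"
      using that by (simp add: sum_subtractf field_simps)
    ultimately show ?thesis using that by (simp add: abs_divide field_simps)
  qed
  then have "\<forall>\<^sub>F n in sequentially. \<bar>(\<Sum>a\<in>{1..n}. X a) / n - c\<bar> \<le> K / n + e / 2"
    by (intro eventually_sequentiallyI[of "Suc N"]) auto
  moreover have "(\<lambda>n. K / n + e / 2) \<longlonglongrightarrow> e / 2"
    using tendsto_add[OF lim_const_over_n[of K] tendsto_const[of "e / 2"]] by simp
  ultimately show "\<exists>u l. u \<longlonglongrightarrow> l \<and> l < e \<and> (\<forall>\<^sub>F n in sequentially. \<bar>(\<Sum>a\<in>{1..n}. X a) / n - c\<bar> \<le> u n)"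
    using \<open>0 < e\<close> by (intro exI[where x="\<lambda>n. K / real n + e / 2"] exI[where x="e / 2"]) auto
qed

lemma abs_mean_le:
  fixes g :: "nat \<Rightarrow> real"
  assumes "\<And>i. \<bar>g i\<bar> \<le> B"
  shows "\<bar>(\<Sum>i\<in>{1..n}. g i) / n\<bar> \<le> B"
proof -
  have "0 \<le> B" using assms order_trans[OF abs_ge_zero] by blast
  have "\<bar>\<Sum>i\<in>{1..n}. g i\<bar> \<le> (\<Sum>i\<in>{1..n}. B)"
    using assms by (intro order_trans[OF sum_abs] sum_mono)
  then show ?thesis using \<open>0 \<le> B\<close> by (cases "n = 0") (simp_all add: abs_divide field_simps)
qed

lemma sum_upper_triangle_shift_le:
  fixes \<delta> :: "nat \<Rightarrow> real"
  assumes "\<And>k. 0 \<le> \<delta> k"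
  shows "(\<Sum>a\<in>{1..n}. \<Sum>b\<in>{1..n}. if a < b then \<delta> (b - a) else 0) \<le> n * (\<Sum>k\<in>{1..n}. \<delta> k)"
proof -
  have "(\<Sum>b\<in>{1..n}. if a < b then \<delta> (b - a) else 0) \<le> (\<Sum>k\<in>{1..n}. \<delta> k)" for a
  proof -
    have "(\<Sum>b\<in>{1..n}. if a < b then \<delta> (b - a) else 0) = (\<Sum>b\<in>{b\<in>{1..n}. a < b}. \<delta> (b - a))"
      by (rule sum.inter_filter[symmetric]) simp
    also have "\<dots> = (\<Sum>k\<in>(\<lambda>b. b - a) ` {b\<in>{1..n}. a < b}. \<delta> k)"
      by (rule sum.reindex[symmetric, unfolded comp_def]) (auto simp: inj_on_def)
    also have "\<dots> \<le> (\<Sum>k\<in>{1..n}. \<delta> k)"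
      using assms by (intro sum_mono2) auto
    finally show ?thesis .
  qed
  then have "(\<Sum>a\<in>{1..n}. \<Sum>b\<in>{1..n}. if a < b then \<delta> (b - a) else 0) \<le> (\<Sum>a\<in>{1..n}. \<Sum>k\<in>{1..n}. \<delta> k)"
    by (rule sum_mono)
  then show ?thesis by simp
qed

section \<open>Bounded Borel functions\<close>

definition bdd_borel :: "('a::topological_space \<Rightarrow> real) \<Rightarrow> bool" where
  "bdd_borel f \<longleftrightarrow> f \<in> borel_measurable borel \<and> (\<exists>B. \<forall>x. \<bar>f x\<bar> \<le> B)"

lemma bdd_borelE:
  assumes "bdd_borel f"
  obtains B where "0 \<le> B" "\<And>x. \<bar>f x\<bar> \<le> B"
  using assms unfolding bdd_borel_def by (meson abs_ge_zero order_trans)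

lemma bdd_borel_measurable: "bdd_borel f \<Longrightarrow> f \<in> borel_measurable borel"
  unfolding bdd_borel_def by simp

lemma bdd_borel_indicator: "A \<in> sets borel \<Longrightarrow> bdd_borel (indicator A)"
  unfolding bdd_borel_def by (auto intro!: exI[of _ 1] simp: indicator_def)

lemma bdd_borel_const: "bdd_borel (\<lambda>x. c)"
  unfolding bdd_borel_def by auto

lemma bdd_borel_mult:
  assumes "bdd_borel f" "bdd_borel g"
  shows "bdd_borel (\<lambda>x. f x * g x)"
proof -
  obtain B1 B2 where "\<And>x. \<bar>f x\<bar> \<le> B1" "\<And>x. \<bar>g x\<bar> \<le> B2" "0 \<le> B1"
    using assms by (metis bdd_borelE)
  then have "\<bar>f x * g x\<bar> \<le> B1 * B2" for x
    unfolding abs_mult by (intro mult_mono) auto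
  then show ?thesis using assms unfolding bdd_borel_def by auto
qed

lemma bdd_borel_add:
  assumes "bdd_borel f" "bdd_borel g"
  shows "bdd_borel (\<lambda>x. f x + g x)"
proof -
  obtain B1 B2 where "\<And>x. \<bar>f x\<bar> \<le> B1" "\<And>x. \<bar>g x\<bar> \<le> B2"
    using assms by (metis bdd_borelE)
  then have "\<bar>f x + g x\<bar> \<le> B1 + B2" for x
    by (meson abs_triangle_ineq add_mono order_trans)
  then show ?thesis using assms unfolding bdd_borel_def by auto
qed

lemma bdd_borel_sum:
  "finite Z \<Longrightarrow> (\<And>z. z \<in> Z \<Longrightarrow> bdd_borel (h z)) \<Longrightarrow> bdd_borel (\<lambda>x. \<Sum>z\<in>Z. h z x)"
  by (induction Z rule: finite_induct) (auto intro: bdd_borel_const bdd_borel_add)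

lemma bdd_borel_if_bcont: "bcont f \<Longrightarrow> bdd_borel f"
  unfolding bcont_def bdd_borel_def bounded_iff by (auto intro: borel_measurable_continuous_onI)

lemma bdd_borel_bounds:
  assumes "\<And>j. bdd_borel (\<phi> j)"
  obtains B where "\<And>j x. \<bar>\<phi> j x\<bar> \<le> B j"
proof -
  have "\<exists>B. \<forall>x. \<bar>\<phi> j x\<bar> \<le> B" for j using assms[of j] unfolding bdd_borel_def by blast
  then show thesis using that by metis
qed

lemma bdd_borel_uniform_approx:
  fixes f :: "'a::topological_space \<Rightarrow> real"
  assumes "bdd_borel f" "0 < e"
  obtains Z :: "int set" and A :: "int \<Rightarrow> 'a set"
  where "finite Z" "\<And>z. A z \<in> sets borel"
    "\<And>x. \<bar>f x - (\<Sum>z\<in>Z. (real_of_int z * e) * indicator (A z) x)\<bar> \<le> e"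
proof -
  obtain B where B: "\<And>x. \<bar>f x\<bar> \<le> B" using assms(1) bdd_borelE by blast
  define Z where "Z = {- \<lceil>B / e\<rceil> - 1 .. \<lceil>B / e\<rceil> + 1}"
  define A where "A z = {x. \<lfloor>f x / e\<rfloor> = z}" for z
  have "A z \<in> sets borel" for z
    unfolding A_def using bdd_borel_measurable[OF assms(1)] by measurable
  moreover have "\<bar>f x - (\<Sum>z\<in>Z. (real_of_int z * e) * indicator (A z) x)\<bar> \<le> e" for x
  proof -
    have "\<bar>f x / e\<bar> \<le> B / e" using B[of x] \<open>0 < e\<close> by (simp add: abs_divide divide_right_mono)
    then have "\<lfloor>f x / e\<rfloor> \<in> Z" unfolding Z_def by (simp; linarith)
    moreover have "(\<Sum>z\<in>Z. (real_of_int z * e) * indicator (A z) x)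
        = (\<Sum>z\<in>Z. if z = \<lfloor>f x / e\<rfloor> then real_of_int z * e else 0)"
      unfolding A_def indicator_def by (intro sum.cong) auto
    ultimately have sum_eq: "(\<Sum>z\<in>Z. (real_of_int z * e) * indicator (A z) x) = \<lfloor>f x / e\<rfloor> * e"
      unfolding Z_def by (simp add: sum.delta')
    have fl: "\<lfloor>f x / e\<rfloor> \<le> f x / e" "f x / e < \<lfloor>f x / e\<rfloor> + 1" by linarith+
    have "\<lfloor>f x / e\<rfloor> * e \<le> f x" "f x < (\<lfloor>f x / e\<rfloor> + 1) * e"
      using mult_right_mono[OF fl(1), of e] mult_strict_right_mono[OF fl(2) \<open>0 < e\<close>] \<open>0 < e\<close>
      by auto
    then show ?thesis unfolding sum_eq by (simp add: distrib_right)
  qed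
  ultimately show thesis using that[of Z A] unfolding Z_def by simp
qed

definition bdd_borel_functional ::
    "real \<Rightarrow> (('a::topological_space \<Rightarrow> real) \<Rightarrow> real) \<Rightarrow> bool" where
  "bdd_borel_functional C T \<longleftrightarrow>
     (\<forall>f g c. bdd_borel f \<longrightarrow> bdd_borel g \<longrightarrow> T (\<lambda>x. c * f x + g x) = c * T f + T g) \<and>
     (\<forall>f B. bdd_borel f \<longrightarrow> (\<forall>x. \<bar>f x\<bar> \<le> B) \<longrightarrow> \<bar>T f\<bar> \<le> C * B)"

lemma bdd_borel_functionalI:
  assumes "\<And>f g c. bdd_borel f \<Longrightarrow> bdd_borel g \<Longrightarrow> T (\<lambda>x. c * f x + g x) = c * T f + T g"
    and "\<And>f B. bdd_borel f \<Longrightarrow> (\<And>x. \<bar>f x\<bar> \<le> B) \<Longrightarrow> \<bar>T f\<bar> \<le> C * B"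
  shows "bdd_borel_functional C T"
  using assms unfolding bdd_borel_functional_def by blast

lemma bdd_borel_functional_linear:
  "bdd_borel_functional C T \<Longrightarrow> bdd_borel f \<Longrightarrow> bdd_borel g \<Longrightarrow>
    T (\<lambda>x. c * f x + g x) = c * T f + T g"
  unfolding bdd_borel_functional_def by blast

lemma bdd_borel_functional_bound:
  "bdd_borel_functional C T \<Longrightarrow> bdd_borel f \<Longrightarrow> (\<And>x. \<bar>f x\<bar> \<le> B) \<Longrightarrow> \<bar>T f\<bar> \<le> C * B"
  unfolding bdd_borel_functional_def by blast

lemma bdd_borel_functional_zero: "0 \<le> C \<Longrightarrow> bdd_borel_functional C (\<lambda>f. 0)"
  by (rule bdd_borel_functionalI) (auto intro: mult_nonneg_nonneg order_trans[OF abs_ge_zero])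

lemma bdd_borel_functional_diff:
  "bdd_borel_functional C T \<Longrightarrow> bdd_borel f \<Longrightarrow> bdd_borel g \<Longrightarrow> T (\<lambda>x. f x - g x) = T f - T g"
  using bdd_borel_functional_linear[of C T g f "-1"] by simp

lemma bdd_borel_functional_sum:
  assumes T: "bdd_borel_functional C T" and "finite Z" and h: "\<And>z. z \<in> Z \<Longrightarrow> bdd_borel (h z)"
  shows "T (\<lambda>x. \<Sum>z\<in>Z. w z * h z x) = (\<Sum>z\<in>Z. w z * T (h z))"
  using \<open>finite Z\<close> h
proof (induction Z rule: finite_induct)
  case empty
  have "T (\<lambda>x. 0) = T (\<lambda>x. 0) + T (\<lambda>x. 0)"
    using bdd_borel_functional_linear[OF T bdd_borel_const bdd_borel_const, of 1 0 0] by simp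
  then show ?case by simp
next
  case (insert z Z)
  have "bdd_borel (\<lambda>x. \<Sum>z\<in>Z. w z * h z x)"
    using insert by (intro bdd_borel_sum bdd_borel_mult bdd_borel_const) auto
  then show ?case
    using insert bdd_borel_functional_linear[OF T, of "h z" "\<lambda>x. \<Sum>z\<in>Z. w z * h z x" "w z"] by simp
qed

lemma bdd_borel_functional_indicator_Un:
  assumes "bdd_borel_functional C T" "A \<in> sets borel" "B \<in> sets borel" "A \<inter> B = {}"
  shows "T (indicator (A \<union> B)) = T (indicator A) + T (indicator B)"
proof -
  have "indicator (A \<union> B) = (\<lambda>x. 1 * indicator A x + indicator B x :: real)"
    using assms(4) by (auto simp: indicator_def fun_eq_iff)
  then show ?thesis
    using bdd_borel_functional_linear[OF assms(1) bdd_borel_indicator[OF assms(2)]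
        bdd_borel_indicator[OF assms(3)], of 1]
    by simp
qed

lemma bdd_borel_functional_indicator_Diff:
  assumes "bdd_borel_functional C T" "A \<in> sets borel"
  shows "T (indicator (UNIV - A)) = T (indicator UNIV) - T (indicator A)"
proof -
  have "indicator (UNIV - A) = (\<lambda>x. indicator UNIV x - indicator A x :: real)"
    by (auto simp: indicator_def)
  then show ?thesis
    using bdd_borel_functional_diff[OF assms(1) bdd_borel_indicator[of UNIV]
        bdd_borel_indicator[OF assms(2)]]
    by simp
qed

lemma tendsto_bdd_borel_functional:
  assumes L: "\<And>n. bdd_borel_functional C (L n)" and l: "bdd_borel_functional C l"
    and ind: "\<And>A. A \<in> sets borel \<Longrightarrow> (\<lambda>n. L n (indicator A)) \<longlonglongrightarrow> l (indicator A)"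
    and f: "bdd_borel f"
  shows "(\<lambda>n. L n f) \<longlonglongrightarrow> l f"
proof (rule LIM_zero_cancel, rule tendsto_zero_by_approximate_bounds)
  fix e :: real assume "0 < e"
  define d where "d = e / (2 * \<bar>C\<bar> + 1)"
  have "0 < d" "2 * \<bar>C\<bar> * d < e"
    using \<open>0 < e\<close> by (auto simp: d_def field_simps)
  obtain Z :: "int set" and A where Z: "finite Z" "\<And>z. A z \<in> sets borel"
    and approx: "\<And>x. \<bar>f x - (\<Sum>z\<in>Z. (real_of_int z * d) * indicator (A z) x)\<bar> \<le> d"
    using bdd_borel_uniform_approx[OF f \<open>0 < d\<close>] by blast
  define g where "g x = (\<Sum>z\<in>Z. (real_of_int z * d) * indicator (A z) x)" for x
  have g: "bdd_borel g"
    unfolding g_def using Z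
    by (intro bdd_borel_sum bdd_borel_mult bdd_borel_const bdd_borel_indicator)
  have "(\<lambda>n. L n g) \<longlonglongrightarrow> l g"
    unfolding g_def bdd_borel_functional_sum[OF L Z(1) bdd_borel_indicator[OF Z(2)]]
      bdd_borel_functional_sum[OF l Z(1) bdd_borel_indicator[OF Z(2)]]
    by (intro tendsto_sum tendsto_mult tendsto_const ind Z(2))
  then have "(\<lambda>n. \<bar>L n g - l g\<bar> + 2 * \<bar>C\<bar> * d) \<longlonglongrightarrow> \<bar>l g - l g\<bar> + 2 * \<bar>C\<bar> * d"
    by (intro tendsto_intros)
  moreover have "\<bar>L n f - l f\<bar> \<le> \<bar>L n g - l g\<bar> + 2 * \<bar>C\<bar> * d" for n
  proof -
    have fg: "bdd_borel (\<lambda>x. f x - g x)" "\<And>x. \<bar>f x - g x\<bar> \<le> d"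
      using bdd_borel_add[OF f bdd_borel_mult[OF bdd_borel_const[of "-1"] g]] approx
      by (simp_all add: g_def)
    have "\<bar>L n f - L n g\<bar> \<le> \<bar>C\<bar> * d" "\<bar>l f - l g\<bar> \<le> \<bar>C\<bar> * d"
      using bdd_borel_functional_bound[OF L fg] bdd_borel_functional_bound[OF l fg] \<open>0 < d\<close>
        bdd_borel_functional_diff[OF L f g] bdd_borel_functional_diff[OF l f g]
      by (auto intro: order_trans[OF _ mult_right_mono[of C "\<bar>C\<bar>" d]])
    then show ?thesis by linarith
  qed
  ultimately show "\<exists>u l'. u \<longlonglongrightarrow> l' \<and> l' < e \<and> (\<forall>\<^sub>F n in sequentially. \<bar>L n f - l f\<bar> \<le> u n)"
    using \<open>2 * \<bar>C\<bar> * d < e\<close> by (intro exI conjI always_eventually allI) auto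
qed

section \<open>Extension from a \<pi>-system\<close>

text \<open>The domination by \<open>m\<close> carries the convergence through countable disjoint unions: the tail
  of the union has small \<open>\<nu>\<close>-measure.\<close>
lemma tendsto_zero_sigma_sets:
  fixes L m :: "'a set \<Rightarrow> nat \<Rightarrow> real"
  assumes "finite_measure \<nu>" "Int_stable P" "P \<subseteq> Pow \<Omega>" and sets: "sets \<nu> = sigma_sets \<Omega> P"
    and basic: "\<And>A. A \<in> P \<Longrightarrow> L A \<longlonglongrightarrow> 0"
    and space: "L \<Omega> \<longlonglongrightarrow> 0"
    and diff: "\<And>A n. A \<in> sets \<nu> \<Longrightarrow> L (\<Omega> - A) n = L \<Omega> n - L A n"
    and add: "\<And>A B n. A \<in> sets \<nu> \<Longrightarrow> B \<in> sets \<nu> \<Longrightarrow> A \<inter> B = {} \<Longrightarrow> L (A \<union> B) n = L A n + L B n"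
    and bound: "\<And>A n. A \<in> sets \<nu> \<Longrightarrow> \<bar>L A n\<bar> \<le> C * m A n"
    and m: "\<And>A. A \<in> sets \<nu> \<Longrightarrow> m A \<longlonglongrightarrow> measure \<nu> A"
    and "A \<in> sets \<nu>"
  shows "L A \<longlonglongrightarrow> 0"
  using assms(2,3) \<open>A \<in> sets \<nu>\<close>[unfolded sets]
proof (induction rule: sigma_sets_induct_disjoint)
  case (basic A)
  then show ?case by (rule assms(5))
next
  case empty
  have "L {} n = 0" for n using add[OF sets.empty_sets sets.empty_sets, of n] by simp
  then show ?case by simp
next
  case (compl A)
  then show ?case using tendsto_diff[OF space compl(2)] diff[of A] sets by simp
next
  case (union A)
  have A: "A i \<in> sets \<nu>" for i using union(2) sets by auto
  define T where "T M = (\<Union>i\<in>{M..}. A i)" for M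
  have T: "T M \<in> sets \<nu>" for M unfolding T_def using A by auto
  have T_Suc: "T M = A M \<union> T (Suc M)" "A M \<inter> T (Suc M) = {}" for M
  proof -
    have "{M..} = insert M {Suc M..}" by auto
    then show "T M = A M \<union> T (Suc M)" unfolding T_def by simp
    have "A M \<inter> A i = {}" if "Suc M \<le> i" for i
      using union(1) that unfolding disjoint_family_on_def by auto
    then show "A M \<inter> T (Suc M) = {}" unfolding T_def by auto
  qed
  have split: "L (\<Union>i. A i) n = (\<Sum>i<M. L (A i) n) + L (T M) n" for M n
  proof (induction M)
    case 0
    then show ?case by (simp add: T_def)
  next
    case (Suc M)
    then show ?case using add[OF A[of M] T[of "Suc M"] T_Suc(2)[of M], of n] T_Suc(1)[of M] by simp
  qed
  have "(\<lambda>M. C * measure \<nu> (T M)) \<longlonglongrightarrow> C * measure \<nu> (\<Inter>M. T M)"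
    using T by (intro tendsto_mult_left finite_measure.finite_Lim_measure_decseq assms(1))
      (auto simp: decseq_def T_def intro: order_trans)
  moreover have "(\<Inter>M. T M) = {}"
  proof (rule ccontr)
    assume "(\<Inter>M. T M) \<noteq> {}"
    then obtain x where x: "\<And>M. x \<in> T M" by auto
    then obtain i where "x \<in> A i" by (auto simp: T_def)
    with T_Suc(2)[of i] x[of "Suc i"] show False by auto
  qed
  ultimately have "(\<lambda>M. C * measure \<nu> (T M)) \<longlonglongrightarrow> 0" by simp
  show ?case
  proof (rule tendsto_zero_by_approximate_bounds)
    fix e :: real assume "0 < e"
    then obtain M where M: "C * measure \<nu> (T M) < e"
      using order_tendstoD(2)[OF \<open>(\<lambda>M. C * measure \<nu> (T M)) \<longlonglongrightarrow> 0\<close> \<open>0 < e\<close>]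
      by (auto simp: eventually_sequentially)
    have "(\<lambda>n. \<bar>\<Sum>i<M. L (A i) n\<bar> + C * m (T M) n) \<longlonglongrightarrow> \<bar>\<Sum>i<M. 0\<bar> + C * measure \<nu> (T M)"
      by (intro tendsto_intros union(3) m T)
    moreover have "\<bar>L (\<Union>i. A i) n\<bar> \<le> \<bar>\<Sum>i<M. L (A i) n\<bar> + C * m (T M) n" for n
      using split[of n M] bound[OF T, of M n] by linarith
    ultimately show "\<exists>u l. u \<longlonglongrightarrow> l \<and> l < e \<and> (\<forall>\<^sub>F n in sequentially. \<bar>L (\<Union>i. A i) n\<bar> \<le> u n)"
      using M by (intro exI conjI always_eventually allI) auto
  qed
qed

lemma (in finite_measure) integrable_bounded:
  fixes f :: "'a \<Rightarrow> real"
  assumes "f \<in> borel_measurable M" "\<And>x. \<bar>f x\<bar> \<le> B"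
  shows "integrable M f"
  using assms by (intro integrable_const_bound[where B=B]) auto

lemma (in prob_space) abs_integral_le:
  fixes f :: "'a \<Rightarrow> real"
  assumes "f \<in> borel_measurable M" "\<And>x. \<bar>f x\<bar> \<le> B"
  shows "\<bar>integral\<^sup>L M f\<bar> \<le> B"
proof -
  have "\<bar>integral\<^sup>L M f\<bar> \<le> (\<integral>x. \<bar>f x\<bar> \<partial>M)"
    using integral_norm_bound[of M f] by simp
  also have "\<dots> \<le> (\<integral>x. B \<partial>M)"
    using assms by (intro integral_mono integrable_bounded) auto
  finally show ?thesis by (simp add: prob_space)
qed

lemma (in prob_space) abs_integral_mult_le:
  fixes f h :: "'a \<Rightarrow> real"
  assumes "f \<in> borel_measurable M" "h \<in> borel_measurable M"
    and f: "\<And>x. \<bar>f x\<bar> \<le> Bf" and h: "\<And>x. \<bar>h x\<bar> \<le> Bh"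
  shows "\<bar>\<integral>x. f x * h x \<partial>M\<bar> \<le> Bf * (\<integral>x. \<bar>h x\<bar> \<partial>M)"
proof -
  have "0 \<le> Bf" using f order_trans[OF abs_ge_zero] by blast
  have "\<bar>\<integral>x. f x * h x \<partial>M\<bar> \<le> (\<integral>x. \<bar>f x * h x\<bar> \<partial>M)"
    using integral_norm_bound[of M "\<lambda>x. f x * h x"] by simp
  also have "\<dots> \<le> (\<integral>x. Bf * \<bar>h x\<bar> \<partial>M)"
  proof (rule integral_mono)
    show "integrable M (\<lambda>x. \<bar>f x * h x\<bar>)"
      using assms \<open>0 \<le> Bf\<close> by (intro integrable_bounded[where B="Bf * Bh"])
        (auto simp: abs_mult intro: mult_mono)
    show "integrable M (\<lambda>x. Bf * \<bar>h x\<bar>)"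
      using assms by (intro integrable_mult_right integrable_bounded[where B=Bh]) auto
  qed (auto simp: abs_mult intro: mult_right_mono f)
  finally show ?thesis by simp
qed

lemma (in prob_space) integral_abs_square_le:
  fixes g :: "'a \<Rightarrow> real"
  assumes "g \<in> borel_measurable M" "\<And>x. \<bar>g x\<bar> \<le> B"
  shows "(\<integral>x. \<bar>g x\<bar> \<partial>M)\<^sup>2 \<le> (\<integral>x. (g x)\<^sup>2 \<partial>M)"
proof -
  have "\<bar>\<bar>g x\<bar>\<^sup>2\<bar> \<le> B\<^sup>2" for x
    using power_mono[OF assms(2)[of x] abs_ge_zero, of 2] by simp
  then have "integrable M (\<lambda>x. \<bar>g x\<bar>)" "integrable M (\<lambda>x. \<bar>g x\<bar>\<^sup>2)"
    using assms by (auto intro: integrable_bounded[where B="B\<^sup>2"] integrable_bounded[where B=B])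
  from variance_eq[OF this] variance_positive[of "\<lambda>x. \<bar>g x\<bar>"] show ?thesis by simp
qed

abbreviation perms :: "nat \<Rightarrow> (nat \<Rightarrow> nat) set" where
  "perms n \<equiv> {\<sigma>. \<sigma> permutes {1..n}}"

lemma finite_perms: "finite (perms n)"
  by (rule finite_permutations) simp

lemma card_perms: "card (perms n) = fact n"
  by (rule card_permutations) simp_all

lemma prob_space_uniform_perms: "prob_space (uniform_count_measure (perms n))"
  using finite_perms permutes_id by (intro prob_space_uniform_count_measure) blast+

lemma measurable_component_Epow:
  "j \<in> {1..n} \<Longrightarrow> f \<in> borel_measurable borel \<Longrightarrow> (\<lambda>y. f (y j)) \<in> borel_measurable (Epow n)"
  unfolding Epow_def by (rule measurable_compose[OF measurable_component_singleton]) auto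

lemma measurable_prod_component_Epow:
  assumes "k \<le> n" "\<And>j. bdd_borel (\<phi> j)"
  shows "(\<lambda>y. \<Prod>j\<in>{1..k}. \<phi> j (y j)) \<in> borel_measurable (Epow n)"
  using assms by (intro borel_measurable_prod measurable_component_Epow bdd_borel_measurable) auto

lemma measurable_permute_Epow:
  assumes "\<pi> permutes {1..n}"
  shows "(\<lambda>y. \<lambda>j\<in>{1..n}. y (\<pi> j)) \<in> measurable (Epow n) (Epow n)"
  unfolding Epow_def using permutes_in_image[OF assms]
  by (intro measurable_restrict measurable_component_singleton) auto

definition coord_avg :: "('a \<Rightarrow> real) \<Rightarrow> nat \<Rightarrow> (nat \<Rightarrow> 'a) \<Rightarrow> real" where
  "coord_avg f n y = (\<Sum>i\<in>{1..n}. f (y i)) / n"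

section \<open>Covariances along orbits\<close>

locale borel_dynamical_system = prob_space \<mu> for \<mu> :: "'a::topological_space measure" +
  fixes S :: "'a \<Rightarrow> 'a"
  assumes sets_eq_borel: "sets \<mu> = sets borel"
    and S_measurable: "S \<in> borel_measurable borel"
begin

lemma space_eq_UNIV: "space \<mu> = UNIV"
  using sets_eq_imp_space_eq[OF sets_eq_borel] by simp

lemma funpow_measurable_mu: "S ^^ n \<in> measurable \<mu> borel"
  using measurable_compose_n[OF S_measurable] measurable_cong_sets[OF sets_eq_borel refl] by blast

lemma measurable_comp_funpow:
  "f \<in> borel_measurable borel \<Longrightarrow> (\<lambda>x. f ((S ^^ n) x)) \<in> borel_measurable \<mu>"
  by (rule measurable_compose[OF funpow_measurable_mu])

lemma integrable_comp_funpow: "bdd_borel f \<Longrightarrow> integrable \<mu> (\<lambda>x. f ((S ^^ n) x))"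
  by (metis bdd_borelE bdd_borel_measurable integrable_bounded measurable_comp_funpow)

lemma integrable_comp_funpow_mult:
  assumes "bdd_borel f" "bdd_borel g"
  shows "integrable \<mu> (\<lambda>x. f ((S ^^ a) x) * g ((S ^^ b) x))"
proof -
  obtain Bf Bg where "0 \<le> Bf" "\<And>x. \<bar>f x\<bar> \<le> Bf" "\<And>x. \<bar>g x\<bar> \<le> Bg"
    using assms by (metis bdd_borelE)
  then show ?thesis
    using assms
    by (intro integrable_bounded[where B="Bf * Bg"] borel_measurable_times measurable_comp_funpow
        bdd_borel_measurable) (auto simp: abs_mult intro: mult_mono)
qed

definition mean_at :: "('a \<Rightarrow> real) \<Rightarrow> nat \<Rightarrow> real" where
  "mean_at f n = (\<integral>x. f ((S ^^ n) x) \<partial>\<mu>)"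

lemma mean_at_indicator: "mean_at (indicator A) n = measure \<mu> ((S ^^ n) -` A)"
proof -
  have "(\<lambda>x. indicator A ((S ^^ n) x) :: real) = indicator ((S ^^ n) -` A)"
    by (auto simp: indicator_def)
  then show ?thesis unfolding mean_at_def using space_eq_UNIV by simp
qed

lemma mean_at_functional: "bdd_borel_functional 1 (\<lambda>f. mean_at f n)"
proof (rule bdd_borel_functionalI)
  show "mean_at (\<lambda>x. c * f x + g x) n = c * mean_at f n + mean_at g n"
    if "bdd_borel f" "bdd_borel g" for f g c
    unfolding mean_at_def
    using integrable_comp_funpow[OF that(1)] integrable_comp_funpow[OF that(2)]
    by simp
  show "\<bar>mean_at f n\<bar> \<le> 1 * B" if "bdd_borel f" "\<And>x. \<bar>f x\<bar> \<le> B" for f B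
    unfolding mean_at_def using that
    by (simp add: abs_integral_le bdd_borel_measurable measurable_comp_funpow)
qed

definition cov :: "('a \<Rightarrow> real) \<Rightarrow> ('a \<Rightarrow> real) \<Rightarrow> nat \<Rightarrow> nat \<Rightarrow> real" where
  "cov f g a b = (\<integral>x. f ((S ^^ a) x) * g ((S ^^ b) x) \<partial>\<mu>) - mean_at f a * mean_at g b"

definition avg_cov :: "('a \<Rightarrow> real) \<Rightarrow> ('a \<Rightarrow> real) \<Rightarrow> nat \<Rightarrow> real" where
  "avg_cov f g n = (\<Sum>a\<in>{1..n}. \<Sum>b\<in>{1..n}. if a < b then cov f g a b else 0) / (real n)\<^sup>2"

lemma cov_linear_left:
  assumes "bdd_borel f1" "bdd_borel f2" "bdd_borel g"
  shows "cov (\<lambda>x. c * f1 x + f2 x) g a b = c * cov f1 g a b + cov f2 g a b"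
proof -
  have "(\<integral>x. (c * f1 ((S ^^ a) x) + f2 ((S ^^ a) x)) * g ((S ^^ b) x) \<partial>\<mu>)
      = c * (\<integral>x. f1 ((S ^^ a) x) * g ((S ^^ b) x) \<partial>\<mu>) + (\<integral>x. f2 ((S ^^ a) x) * g ((S ^^ b) x) \<partial>\<mu>)"
    using integrable_comp_funpow_mult[OF assms(1,3)] integrable_comp_funpow_mult[OF assms(2,3)]
    by (simp add: distrib_right mult.assoc)
  then show ?thesis
    unfolding cov_def bdd_borel_functional_linear[OF mean_at_functional assms(1,2)]
    by (simp add: algebra_simps)
qed

lemma cov_linear_right:
  assumes "bdd_borel f" "bdd_borel g1" "bdd_borel g2"
  shows "cov f (\<lambda>x. c * g1 x + g2 x) a b = c * cov f g1 a b + cov f g2 a b"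
proof -
  have "(\<integral>x. f ((S ^^ a) x) * (c * g1 ((S ^^ b) x) + g2 ((S ^^ b) x)) \<partial>\<mu>)
      = c * (\<integral>x. f ((S ^^ a) x) * g1 ((S ^^ b) x) \<partial>\<mu>) + (\<integral>x. f ((S ^^ a) x) * g2 ((S ^^ b) x) \<partial>\<mu>)"
    using integrable_comp_funpow_mult[OF assms(1,2)] integrable_comp_funpow_mult[OF assms(1,3)]
    by (simp add: distrib_left mult.left_commute)
  then show ?thesis
    unfolding cov_def bdd_borel_functional_linear[OF mean_at_functional assms(2,3)]
    by (simp add: algebra_simps)
qed

lemma abs_cov_le:
  assumes "bdd_borel f" "bdd_borel g" "\<And>x. \<bar>f x\<bar> \<le> Bf" "\<And>x. \<bar>g x\<bar> \<le> Bg"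
  shows "\<bar>cov f g a b\<bar> \<le> 2 * Bf * Bg"
proof -
  have "0 \<le> Bf" using assms(3) order_trans[OF abs_ge_zero] by blast
  have "\<bar>f x * g y\<bar> \<le> Bf * Bg" for x y
    unfolding abs_mult using assms(3,4) \<open>0 \<le> Bf\<close> by (intro mult_mono) auto
  then have "\<bar>\<integral>x. f ((S ^^ a) x) * g ((S ^^ b) x) \<partial>\<mu>\<bar> \<le> Bf * Bg"
    using assms(1,2)
    by (intro abs_integral_le borel_measurable_times measurable_comp_funpow bdd_borel_measurable)
  moreover have "\<bar>mean_at f a * mean_at g b\<bar> \<le> Bf * Bg"
    unfolding abs_mult using \<open>0 \<le> Bf\<close>
      bdd_borel_functional_bound[OF mean_at_functional assms(1,3)]
      bdd_borel_functional_bound[OF mean_at_functional assms(2,4)]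
    by (intro mult_mono) auto
  ultimately show ?thesis unfolding cov_def by linarith
qed

lemma abs_cov_indicator_le:
  assumes A: "A \<in> sets borel" and g: "bdd_borel g" "\<And>x. \<bar>g x\<bar> \<le> Bg"
  shows "\<bar>cov (indicator A) g a b\<bar> \<le> 2 * Bg * measure \<mu> ((S ^^ a) -` A)"
    and "\<bar>cov g (indicator A) b a\<bar> \<le> 2 * Bg * measure \<mu> ((S ^^ a) -` A)"
proof -
  have "0 \<le> Bg" using g(2) order_trans[OF abs_ge_zero] by blast
  have "\<bar>\<integral>x. g ((S ^^ b) x) * indicator A ((S ^^ a) x) \<partial>\<mu>\<bar>
      \<le> Bg * (\<integral>x. \<bar>indicator A ((S ^^ a) x) :: real\<bar> \<partial>\<mu>)"
    using A g by (intro abs_integral_mult_le[where Bh=1] measurable_comp_funpow bdd_borel_measurable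
        bdd_borel_indicator) auto
  also have "(\<integral>x. \<bar>indicator A ((S ^^ a) x) :: real\<bar> \<partial>\<mu>) = measure \<mu> ((S ^^ a) -` A)"
    using mean_at_indicator[of A a] unfolding mean_at_def by simp
  finally have int: "\<bar>\<integral>x. g ((S ^^ b) x) * indicator A ((S ^^ a) x) \<partial>\<mu>\<bar>
      \<le> Bg * measure \<mu> ((S ^^ a) -` A)" .
  have "\<bar>mean_at g b\<bar> \<le> Bg"
    using bdd_borel_functional_bound[OF mean_at_functional g] by simp
  then have prod: "\<bar>mean_at (indicator A) a * mean_at g b\<bar> \<le> Bg * measure \<mu> ((S ^^ a) -` A)"
    unfolding abs_mult mean_at_indicator by (simp add: mult.commute mult_right_mono)
  show "\<bar>cov (indicator A) g a b\<bar> \<le> 2 * Bg * measure \<mu> ((S ^^ a) -` A)"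
    using int prod unfolding cov_def by (simp add: mult.commute)
  show "\<bar>cov g (indicator A) b a\<bar> \<le> 2 * Bg * measure \<mu> ((S ^^ a) -` A)"
    using int prod unfolding cov_def by (simp add: mult.commute)
qed

lemma abs_avg_cov_le:
  assumes "\<And>a b. 1 \<le> a \<Longrightarrow> a < b \<Longrightarrow> b \<le> n \<Longrightarrow> \<bar>cov f g a b\<bar> \<le> h a b"
  shows "\<bar>avg_cov f g n\<bar> \<le> (\<Sum>a\<in>{1..n}. \<Sum>b\<in>{1..n}. if a < b then h a b else 0) / (real n)\<^sup>2"
proof -
  have "\<bar>\<Sum>a\<in>{1..n}. \<Sum>b\<in>{1..n}. if a < b then cov f g a b else 0\<bar>
      \<le> (\<Sum>a\<in>{1..n}. \<Sum>b\<in>{1..n}. if a < b then h a b else 0)"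
    using assms by (intro order_trans[OF sum_abs] sum_mono order_trans[OF sum_abs]) auto
  then show ?thesis unfolding avg_cov_def abs_divide by (simp add: divide_right_mono)
qed

lemma sum_upper_triangle_le:
  fixes h :: "nat \<Rightarrow> nat \<Rightarrow> real"
  assumes "\<And>a b. 0 \<le> h a b"
  shows "(\<Sum>a\<in>{1..n}. \<Sum>b\<in>{1..n}. if a < b then h a b else 0) \<le> (\<Sum>a\<in>{1..n}. \<Sum>b\<in>{1..n}. h a b)"
  using assms by (intro sum_mono) auto

lemma avg_cov_functional_left:
  assumes "bdd_borel g" "\<And>x. \<bar>g x\<bar> \<le> Bg"
  shows "bdd_borel_functional (2 * Bg) (\<lambda>f. avg_cov f g n)"
proof (rule bdd_borel_functionalI)
  show "avg_cov (\<lambda>x. c * f1 x + f2 x) g n = c * avg_cov f1 g n + avg_cov f2 g n"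
    if "bdd_borel f1" "bdd_borel f2" for f1 f2 c
  proof -
    have if_split_lin: "(if a < b then c * cov f1 g a b + cov f2 g a b else 0)
        = c * (if a < b then cov f1 g a b else 0) + (if a < b then cov f2 g a b else 0)" for a b
      by simp
    show ?thesis
      unfolding avg_cov_def cov_linear_left[OF that assms(1)] if_split_lin sum.distrib
        sum_distrib_left[symmetric]
      by (simp add: add_divide_distrib)
  qed
  show "\<bar>avg_cov f g n\<bar> \<le> 2 * Bg * Bf" if "bdd_borel f" "\<And>x. \<bar>f x\<bar> \<le> Bf" for f Bf
  proof -
    have "0 \<le> Bf" "0 \<le> Bg" using that(2) assms(2) order_trans[OF abs_ge_zero] by blast+
    have "\<bar>avg_cov f g n\<bar>
        \<le> (\<Sum>a\<in>{1..n}. \<Sum>b\<in>{1..n}. if a < b then 2 * Bf * Bg else 0) / (real n)\<^sup>2"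
      by (rule abs_avg_cov_le) (rule abs_cov_le[OF that(1) assms(1) that(2) assms(2)])
    also have "\<dots> \<le> (\<Sum>a\<in>{1..n}. \<Sum>b\<in>{1..n}. 2 * Bf * Bg) / (real n)\<^sup>2"
      using \<open>0 \<le> Bf\<close> \<open>0 \<le> Bg\<close> by (intro divide_right_mono sum_upper_triangle_le) auto
    also have "\<dots> \<le> 2 * Bg * Bf"
      using \<open>0 \<le> Bf\<close> \<open>0 \<le> Bg\<close> by (cases "n = 0") (simp_all add: power2_eq_square)
    finally show ?thesis .
  qed
qed

lemma avg_cov_functional_right:
  assumes "bdd_borel f" "\<And>x. \<bar>f x\<bar> \<le> Bf"
  shows "bdd_borel_functional (2 * Bf) (\<lambda>g. avg_cov f g n)"
proof (rule bdd_borel_functionalI)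
  show "avg_cov f (\<lambda>x. c * g1 x + g2 x) n = c * avg_cov f g1 n + avg_cov f g2 n"
    if "bdd_borel g1" "bdd_borel g2" for g1 g2 c
  proof -
    have if_split_lin: "(if a < b then c * cov f g1 a b + cov f g2 a b else 0)
        = c * (if a < b then cov f g1 a b else 0) + (if a < b then cov f g2 a b else 0)" for a b
      by simp
    show ?thesis
      unfolding avg_cov_def cov_linear_right[OF assms(1) that] if_split_lin sum.distrib
        sum_distrib_left[symmetric]
      by (simp add: add_divide_distrib)
  qed
  show "\<bar>avg_cov f g n\<bar> \<le> 2 * Bf * Bg" if "bdd_borel g" "\<And>x. \<bar>g x\<bar> \<le> Bg" for g Bg
    using bdd_borel_functional_bound[OF avg_cov_functional_left[OF that] assms]
    by (simp add: mult_ac)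
qed

lemma cov_indicator_UNIV: "cov (indicator UNIV) g a b = 0" "cov g (indicator UNIV) a b = 0"
  unfolding cov_def using mean_at_indicator[of UNIV] prob_space space_eq_UNIV
  by (simp_all add: mean_at_def)

lemma cov_indicator_eq:
  assumes "a < b"
  shows "cov (indicator A) (indicator B) a b
    = measure \<mu> ((S ^^ a) -` A \<inter> (S ^^ (b - a)) -` ((S ^^ a) -` B))
      - measure \<mu> ((S ^^ a) -` A) * measure \<mu> ((S ^^ (b - a)) -` ((S ^^ a) -` B))"
proof -
  have "S ^^ b = S ^^ a \<circ> S ^^ (b - a)" using assms funpow_add[of a "b - a" S] by simp
  then have "(\<lambda>x. indicator A ((S ^^ a) x) * indicator B ((S ^^ b) x) :: real)
      = indicator ((S ^^ a) -` A \<inter> (S ^^ (b - a)) -` ((S ^^ a) -` B))"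
    "(S ^^ b) -` B = (S ^^ (b - a)) -` ((S ^^ a) -` B)"
    by (auto simp: indicator_def)
  then show ?thesis unfolding cov_def mean_at_indicator using space_eq_UNIV by simp
qed

lemma avg_cov_indicator_UNIV: "avg_cov (indicator UNIV) g n = 0" "avg_cov g (indicator UNIV) n = 0"
  unfolding avg_cov_def cov_indicator_UNIV by simp_all

definition cesaro_prob :: "'a set \<Rightarrow> nat \<Rightarrow> real" where
  "cesaro_prob A n = (\<Sum>a\<in>{1..n}. measure \<mu> ((S ^^ a) -` A)) / n"

lemma abs_avg_cov_indicator_le:
  assumes "A \<in> sets borel" "bdd_borel g" "\<And>x. \<bar>g x\<bar> \<le> Bg"
  shows "\<bar>avg_cov (indicator A) g n\<bar> \<le> 2 * Bg * cesaro_prob A n"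
    and "\<bar>avg_cov g (indicator A) n\<bar> \<le> 2 * Bg * cesaro_prob A n"
proof -
  define p where "p a = 2 * Bg * measure \<mu> ((S ^^ a) -` A)" for a
  have "0 \<le> Bg" using assms(3) order_trans[OF abs_ge_zero] by blast
  then have p: "0 \<le> p a" for a unfolding p_def by simp
  have avg: "(\<Sum>a\<in>{1..n}. p a) / (real n) = 2 * Bg * cesaro_prob A n"
    unfolding p_def cesaro_prob_def by (simp add: sum_distrib_left)
  have "\<bar>avg_cov (indicator A) g n\<bar>
      \<le> (\<Sum>a\<in>{1..n}. \<Sum>b\<in>{1..n}. if a < b then p a else 0) / (real n)\<^sup>2"
    unfolding p_def by (rule abs_avg_cov_le) (rule abs_cov_indicator_le(1)[OF assms])
  also have "\<dots> \<le> (\<Sum>a\<in>{1..n}. \<Sum>b\<in>{1..n}. p a) / (real n)\<^sup>2"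
    using p by (intro divide_right_mono sum_upper_triangle_le) auto
  also have "\<dots> = (\<Sum>a\<in>{1..n}. p a) / (real n)"
    by (simp add: power2_eq_square sum_distrib_left[symmetric])
  finally show "\<bar>avg_cov (indicator A) g n\<bar> \<le> 2 * Bg * cesaro_prob A n" unfolding avg .
  have "\<bar>avg_cov g (indicator A) n\<bar>
      \<le> (\<Sum>a\<in>{1..n}. \<Sum>b\<in>{1..n}. if a < b then p b else 0) / (real n)\<^sup>2"
    unfolding p_def by (rule abs_avg_cov_le) (rule abs_cov_indicator_le(2)[OF assms])
  also have "\<dots> \<le> (\<Sum>a\<in>{1..n}. \<Sum>b\<in>{1..n}. p b) / (real n)\<^sup>2"
    using p by (intro divide_right_mono sum_upper_triangle_le) auto
  also have "\<dots> = (\<Sum>a\<in>{1..n}. p a) / (real n)"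
    by (simp add: power2_eq_square sum_distrib_left[symmetric])
  finally show "\<bar>avg_cov g (indicator A) n\<bar> \<le> 2 * Bg * cesaro_prob A n" unfolding avg .
qed

definition birkhoff_avg :: "('a \<Rightarrow> real) \<Rightarrow> nat \<Rightarrow> 'a \<Rightarrow> real" where
  "birkhoff_avg f n x = (\<Sum>a\<in>{1..n}. f ((S ^^ a) x)) / n"

lemma birkhoff_avg_measurable: "bdd_borel f \<Longrightarrow> birkhoff_avg f n \<in> borel_measurable \<mu>"
  unfolding birkhoff_avg_def[abs_def] using measurable_comp_funpow[OF bdd_borel_measurable]
  by (intro borel_measurable_divide borel_measurable_sum) auto

lemma abs_birkhoff_avg_le: "(\<And>x. \<bar>f x\<bar> \<le> B) \<Longrightarrow> \<bar>birkhoff_avg f n x\<bar> \<le> B"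
  unfolding birkhoff_avg_def by (rule abs_mean_le)

lemma integral_birkhoff_avg:
  "bdd_borel f \<Longrightarrow> (\<integral>x. birkhoff_avg f n x \<partial>\<mu>) = (\<Sum>a\<in>{1..n}. mean_at f a) / n"
  unfolding birkhoff_avg_def mean_at_def using integrable_comp_funpow by simp

lemma integral_birkhoff_avg_square:
  assumes f: "bdd_borel f"
  shows "(\<integral>x. (birkhoff_avg f n x)\<^sup>2 \<partial>\<mu>) = 2 * avg_cov f f n
    + (\<Sum>a\<in>{1..n}. cov f f a a) / (real n)\<^sup>2 + ((\<Sum>a\<in>{1..n}. mean_at f a) / n)\<^sup>2"
proof -
  define G where "G a b = (\<integral>x. f ((S ^^ a) x) * f ((S ^^ b) x) \<partial>\<mu>)" for a b
  have "(\<integral>x. (birkhoff_avg f n x)\<^sup>2 \<partial>\<mu>)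
      = (\<integral>x. (\<Sum>a\<in>{1..n}. \<Sum>b\<in>{1..n}. f ((S ^^ a) x) * f ((S ^^ b) x)) \<partial>\<mu>) / (real n)\<^sup>2"
    unfolding birkhoff_avg_def power_divide by (simp add: power2_eq_square sum_product)
  also have "(\<integral>x. (\<Sum>a\<in>{1..n}. \<Sum>b\<in>{1..n}. f ((S ^^ a) x) * f ((S ^^ b) x)) \<partial>\<mu>)
      = (\<Sum>a\<in>{1..n}. \<Sum>b\<in>{1..n}. G a b)"
    unfolding G_def using integrable_comp_funpow_mult[OF f f] by simp
  also have "(\<Sum>a\<in>{1..n}. \<Sum>b\<in>{1..n}. G a b)
      = 2 * (\<Sum>a\<in>{1..n}. \<Sum>b\<in>{1..n}. if a < b then cov f f a b else 0)
        + (\<Sum>a\<in>{1..n}. cov f f a a) + (\<Sum>a\<in>{1..n}. mean_at f a)\<^sup>2"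
  proof -
    have "G a b = (if a < b then cov f f a b else 0) + (if b < a then cov f f b a else 0)
        + (if a = b then cov f f a a else 0) + mean_at f a * mean_at f b" for a b
      unfolding G_def cov_def by (auto simp: mult.commute)
    moreover have "(\<Sum>a\<in>{1..n}. \<Sum>b\<in>{1..n}. if b < a then cov f f b a else 0)
        = (\<Sum>a\<in>{1..n}. \<Sum>b\<in>{1..n}. if a < b then cov f f a b else 0)"
      by (rule sum.swap)
    ultimately show ?thesis
      by (simp add: sum.distrib sum.delta power2_eq_square sum_product)
  qed
  finally show ?thesis
    unfolding avg_cov_def by (simp add: add_divide_distrib power_divide)
qed

subsection \<open>The symmetrised orbit measure\<close>

definition orbit_tuple :: "nat \<Rightarrow> (nat \<Rightarrow> nat) \<Rightarrow> 'a \<Rightarrow> nat \<Rightarrow> 'a" where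
  "orbit_tuple n \<sigma> x = (\<lambda>j\<in>{1..n}. (S ^^ \<sigma> j) x)"

abbreviation random_orbit :: "nat \<Rightarrow> ((nat \<Rightarrow> nat) \<times> 'a) measure" where
  "random_orbit n \<equiv> uniform_count_measure (perms n) \<Otimes>\<^sub>M \<mu>"

lemma prob_space_random_orbit: "prob_space (random_orbit n)"
proof -
  interpret U: prob_space "uniform_count_measure (perms n)" by (rule prob_space_uniform_perms)
  interpret pair_prob_space "uniform_count_measure (perms n)" \<mu> ..
  show ?thesis by (rule P.prob_space_axioms)
qed

lemma orbit_tuple_measurable:
  "(\<lambda>(\<sigma>, x). orbit_tuple n \<sigma> x) \<in> measurable (random_orbit n) (Epow n)"
proof -
  have "(\<lambda>(\<sigma>, x). orbit_tuple n \<sigma> x) \<in> measurable (count_space (perms n) \<Otimes>\<^sub>M \<mu>) (Epow n)"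
  proof (rule measurable_pair_measure_countable1)
    show "countable (perms n)" using finite_perms by (rule countable_finite)
    show "(\<lambda>x. case (\<sigma>, x) of (\<sigma>, x) \<Rightarrow> orbit_tuple n \<sigma> x) \<in> measurable \<mu> (Epow n)" for \<sigma>
      unfolding orbit_tuple_def Epow_def by (simp, intro measurable_restrict funpow_measurable_mu)
  qed
  moreover have "sets (random_orbit n) = sets (count_space (perms n) \<Otimes>\<^sub>M \<mu>)"
    by (intro sets_pair_measure_cong sets_uniform_count_measure_count_space refl)
  ultimately show ?thesis using measurable_cong_sets by blast
qed

lemma mu_n_eq_distr:
  "mu_n \<mu> S n = distr (random_orbit n) (Epow n) (\<lambda>(\<sigma>, x). orbit_tuple n \<sigma> x)"
  unfolding mu_n_def distr_def
proof (rule measure_of_eq)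
  show "sets (Epow n) \<subseteq> Pow (space (Epow n))" by (rule sets.space_closed)
  fix A :: "(nat \<Rightarrow> 'a) set" assume "A \<in> sigma_sets (space (Epow n)) (sets (Epow n))"
  then have A: "A \<in> sets (Epow n)" by (simp add: sets.sigma_sets_eq)
  define G where "G = (\<lambda>(\<sigma>, x). orbit_tuple n \<sigma> x) -` A \<inter> space (random_orbit n)"
  have G: "G \<in> sets (random_orbit n)"
    unfolding G_def using orbit_tuple_measurable A by (rule measurable_sets)
  have sections: "Pair \<sigma> -` G = {x \<in> space \<mu>. (\<lambda>j\<in>{1..n}. (S ^^ \<sigma> j) x) \<in> A}"
    if "\<sigma> \<in> perms n" for \<sigma>
    using that unfolding G_def orbit_tuple_def
    by (auto simp: space_pair_measure space_uniform_count_measure)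
  have "emeasure (random_orbit n) G
      = (\<integral>\<^sup>+\<sigma>. emeasure \<mu> (Pair \<sigma> -` G) \<partial>uniform_count_measure (perms n))"
    using G by (rule emeasure_pair_measure_alt)
  also have "\<dots> = (\<Sum>\<sigma>\<in>perms n. ennreal (1 / card (perms n)) * emeasure \<mu> (Pair \<sigma> -` G))"
    unfolding uniform_count_measure_def by (rule nn_integral_point_measure_finite[OF finite_perms])
  also have "\<dots> = ennreal (1 / fact n)
      * (\<Sum>\<sigma>\<in>perms n. emeasure \<mu> {x \<in> space \<mu>. (\<lambda>j\<in>{1..n}. (S ^^ \<sigma> j) x) \<in> A})"
    unfolding card_perms sum_distrib_left using sections by simp
  finally show "ennreal (1 / fact n)
      * (\<Sum>\<sigma>\<in>perms n. emeasure \<mu> {x \<in> space \<mu>. (\<lambda>j\<in>{1..n}. (S ^^ \<sigma> j) x) \<in> A})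
      = emeasure (random_orbit n) G" by (rule sym)
qed

lemma sets_mu_n: "sets (mu_n \<mu> S n) = sets (Epow n)"
  unfolding mu_n_eq_distr by simp

lemma prob_space_mu_n: "prob_space (mu_n \<mu> S n)"
  unfolding mu_n_eq_distr
  by (rule prob_space.prob_space_distr[OF prob_space_random_orbit orbit_tuple_measurable])

lemma measurable_mu_n_iff: "g \<in> borel_measurable (mu_n \<mu> S n) \<longleftrightarrow> g \<in> borel_measurable (Epow n)"
  by (rule measurable_cong_sets[OF sets_mu_n refl, THEN eqset_imp_iff])

lemma integral_mu_n:
  fixes g :: "(nat \<Rightarrow> 'a) \<Rightarrow> real"
  assumes g: "g \<in> borel_measurable (Epow n)" "\<And>y. \<bar>g y\<bar> \<le> B"
  shows "(\<integral>y. g y \<partial>mu_n \<mu> S n) = (\<Sum>\<sigma>\<in>perms n. \<integral>x. g (orbit_tuple n \<sigma> x) \<partial>\<mu>) / fact n"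
proof -
  interpret U: prob_space "uniform_count_measure (perms n)" by (rule prob_space_uniform_perms)
  interpret pair_prob_space "uniform_count_measure (perms n)" \<mu> ..
  define G where "G = (\<lambda>(\<sigma>, x). orbit_tuple n \<sigma> x)"
  have "integrable (random_orbit n) (\<lambda>z. g (G z))"
    using measurable_compose[OF orbit_tuple_measurable g(1)] g(2) unfolding G_def
    by (intro P.integrable_bounded[where B=B]) auto
  have "(\<integral>y. g y \<partial>mu_n \<mu> S n) = (\<integral>z. g (G z) \<partial>random_orbit n)"
    unfolding mu_n_eq_distr G_def by (rule integral_distr[OF orbit_tuple_measurable g(1)])
  also have "\<dots> = (\<integral>\<sigma>. (\<integral>x. g (G (\<sigma>, x)) \<partial>\<mu>) \<partial>uniform_count_measure (perms n))"
    using \<open>integrable (random_orbit n) (\<lambda>z. g (G z))\<close> by (rule integral_fst'[symmetric])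
  also have "\<dots> = (\<Sum>\<sigma>\<in>perms n. \<integral>x. g (orbit_tuple n \<sigma> x) \<partial>\<mu>) / fact n"
    unfolding integral_uniform_count_measure[OF finite_perms] card_perms G_def by simp
  finally show ?thesis .
qed

lemma integral_mu_n_permute:
  fixes g :: "(nat \<Rightarrow> 'a) \<Rightarrow> real"
  assumes g: "g \<in> borel_measurable (Epow n)" "\<And>y. \<bar>g y\<bar> \<le> B" and \<pi>: "\<pi> permutes {1..n}"
  shows "(\<integral>y. g (\<lambda>j\<in>{1..n}. y (\<pi> j)) \<partial>mu_n \<mu> S n) = (\<integral>y. g y \<partial>mu_n \<mu> S n)"
proof -
  have tuple: "(\<lambda>j\<in>{1..n}. orbit_tuple n \<sigma> x (\<pi> j)) = orbit_tuple n (\<sigma> \<circ> \<pi>) x" for \<sigma> x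
    unfolding orbit_tuple_def using permutes_in_image[OF \<pi>] by (intro ext) (simp add: restrict_def)
  have "(\<integral>y. g (\<lambda>j\<in>{1..n}. y (\<pi> j)) \<partial>mu_n \<mu> S n)
      = (\<Sum>\<sigma>\<in>perms n. \<integral>x. g (\<lambda>j\<in>{1..n}. orbit_tuple n \<sigma> x (\<pi> j)) \<partial>\<mu>) / fact n"
    by (rule integral_mu_n[OF measurable_compose[OF measurable_permute_Epow[OF \<pi>] g(1)] g(2)])
  also have "\<dots> = (\<Sum>\<sigma>\<in>perms n. \<integral>x. g (orbit_tuple n (\<sigma> \<circ> \<pi>) x) \<partial>\<mu>) / fact n"
    unfolding tuple ..
  also have "(\<Sum>\<sigma>\<in>perms n. \<integral>x. g (orbit_tuple n (\<sigma> \<circ> \<pi>) x) \<partial>\<mu>)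
      = (\<Sum>\<sigma>\<in>perms n. \<integral>x. g (orbit_tuple n \<sigma> x) \<partial>\<mu>)"
    by (rule sum_permutations_compose_right[OF \<pi>, symmetric])
  also have "\<dots> / fact n = (\<integral>y. g y \<partial>mu_n \<mu> S n)"
    by (rule integral_mu_n[OF g, symmetric])
  finally show ?thesis .
qed

lemma symmetric_mu_n: "symmetric_meas n (mu_n \<mu> S n)"
  unfolding symmetric_meas_def
proof (intro conjI sets_mu_n prob_space_mu_n allI impI)
  fix \<phi> :: "nat \<Rightarrow> 'a \<Rightarrow> real" and \<pi>
  assume "(\<forall>i. bcont (\<phi> i)) \<and> \<pi> permutes {1..n}"
  then have \<phi>: "\<And>i. bdd_borel (\<phi> i)" and \<pi>: "\<pi> permutes {1..n}" using bdd_borel_if_bcont by auto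
  obtain B where B: "\<And>i x. \<bar>\<phi> i x\<bar> \<le> B i" using bdd_borel_bounds[where \<phi>=\<phi>, OF \<phi>] by blast
  define g where "g y = (\<Prod>i\<in>{1..n}. \<phi> i (y i))" for y :: "nat \<Rightarrow> 'a"
  have "g \<in> borel_measurable (Epow n)"
    unfolding g_def by (rule measurable_prod_component_Epow[where \<phi>=\<phi>, OF order_refl \<phi>])
  moreover have "\<bar>g y\<bar> \<le> (\<Prod>i\<in>{1..n}. B i)" for y
    unfolding g_def abs_prod by (intro prod_mono) (auto intro: B)
  ultimately have "(\<integral>y. g (\<lambda>j\<in>{1..n}. y (\<pi> j)) \<partial>mu_n \<mu> S n) = (\<integral>y. g y \<partial>mu_n \<mu> S n)"
    by (rule integral_mu_n_permute[OF _ _ \<pi>])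
  moreover have "g (\<lambda>j\<in>{1..n}. y (\<pi> j)) = (\<Prod>i\<in>{1..n}. \<phi> i (y (\<pi> i)))" for y
    unfolding g_def by (intro prod.cong) auto
  ultimately show "(\<integral>x. (\<Prod>i\<in>{1..n}. \<phi> i (x i)) \<partial>mu_n \<mu> S n)
      = (\<integral>x. (\<Prod>i\<in>{1..n}. \<phi> i (x (\<pi> i))) \<partial>mu_n \<mu> S n)"
    unfolding g_def by simp
qed

lemma coord_avg_orbit_tuple:
  assumes "\<sigma> permutes {1..n}"
  shows "coord_avg f n (orbit_tuple n \<sigma> x) = birkhoff_avg f n x"
proof -
  have "(\<Sum>i\<in>{1..n}. f (orbit_tuple n \<sigma> x i)) = (\<Sum>i\<in>{1..n}. f ((S ^^ \<sigma> i) x))"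
    by (simp add: orbit_tuple_def)
  also have "\<dots> = (\<Sum>a\<in>{1..n}. f ((S ^^ a) x))"
    by (rule sum.reindex_bij_betw[OF permutes_imp_bij[OF assms], where g="\<lambda>a. f ((S ^^ a) x)"])
  finally show ?thesis unfolding coord_avg_def birkhoff_avg_def by simp
qed

lemma integral_mu_n_coord_avg_dist:
  assumes f: "bdd_borel f"
  shows "(\<integral>y. \<bar>coord_avg f n y - c\<bar> \<partial>mu_n \<mu> S n) = (\<integral>x. \<bar>birkhoff_avg f n x - c\<bar> \<partial>\<mu>)"
proof -
  obtain B where B: "\<And>x. \<bar>f x\<bar> \<le> B" using bdd_borelE[OF f] by blast
  have "coord_avg f n \<in> borel_measurable (Epow n)"
    unfolding coord_avg_def[abs_def]
    using measurable_component_Epow[OF _ bdd_borel_measurable[OF f]]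
    by (intro borel_measurable_divide borel_measurable_sum) auto
  then have meas: "(\<lambda>y. \<bar>coord_avg f n y - c\<bar>) \<in> borel_measurable (Epow n)" by simp
  have "\<bar>coord_avg f n y\<bar> \<le> B" for y
    unfolding coord_avg_def using B by (rule abs_mean_le)
  then have bound: "\<bar>\<bar>coord_avg f n y - c\<bar>\<bar> \<le> B + \<bar>c\<bar>" for y
    by (smt (verit))
  have "(\<integral>y. \<bar>coord_avg f n y - c\<bar> \<partial>mu_n \<mu> S n)
      = (\<Sum>\<sigma>\<in>perms n. \<integral>x. \<bar>coord_avg f n (orbit_tuple n \<sigma> x) - c\<bar> \<partial>\<mu>) / fact n"
    by (rule integral_mu_n[OF meas bound])
  also have "\<dots> = (\<Sum>\<sigma>\<in>perms n. \<integral>x. \<bar>birkhoff_avg f n x - c\<bar> \<partial>\<mu>) / fact n"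
    by (intro arg_cong[where f="\<lambda>t. t / fact n"] sum.cong refl) (simp add: coord_avg_orbit_tuple)
  also have "\<dots> = (\<integral>x. \<bar>birkhoff_avg f n x - c\<bar> \<partial>\<mu>)"
    unfolding sum_constant card_perms by simp
  finally show ?thesis .
qed

lemma integral_mu_n_swap_coordinate:
  fixes Q :: "(nat \<Rightarrow> 'a) \<Rightarrow> real"
  assumes Q: "Q \<in> borel_measurable (Epow n)" "\<And>y. \<bar>Q y\<bar> \<le> BQ"
    and Q_local: "\<And>y y'. (\<And>j. j \<in> {1..k} \<Longrightarrow> y j = y' j) \<Longrightarrow> Q y = Q y'"
    and \<psi>: "bdd_borel \<psi>" "\<And>x. \<bar>\<psi> x\<bar> \<le> B\<psi>"
    and i: "i \<in> {Suc k..n}"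
  shows "(\<integral>y. Q y * \<psi> (y i) \<partial>mu_n \<mu> S n) = (\<integral>y. Q y * \<psi> (y (Suc k)) \<partial>mu_n \<mu> S n)"
proof -
  define \<pi> where "\<pi> = Transposition.transpose (Suc k) i"
  have \<pi>: "\<pi> permutes {1..n}" unfolding \<pi>_def using i by (intro permutes_swap_id) auto
  have "0 \<le> BQ" using Q(2) order_trans[OF abs_ge_zero] by blast
  have "(\<lambda>y. Q y * \<psi> (y (Suc k))) \<in> borel_measurable (Epow n)"
    using i Q(1)
    by (intro borel_measurable_times measurable_component_Epow bdd_borel_measurable \<psi>(1)) auto
  moreover have "\<bar>Q y * \<psi> (y (Suc k))\<bar> \<le> BQ * B\<psi>" for y
    unfolding abs_mult using Q(2) \<psi>(2) \<open>0 \<le> BQ\<close> by (intro mult_mono) auto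
  ultimately have "(\<integral>y. Q (\<lambda>j\<in>{1..n}. y (\<pi> j)) * \<psi> ((\<lambda>j\<in>{1..n}. y (\<pi> j)) (Suc k)) \<partial>mu_n \<mu> S n)
      = (\<integral>y. Q y * \<psi> (y (Suc k)) \<partial>mu_n \<mu> S n)"
    by (rule integral_mu_n_permute[OF _ _ \<pi>])
  moreover have "Q (\<lambda>j\<in>{1..n}. y (\<pi> j)) * \<psi> ((\<lambda>j\<in>{1..n}. y (\<pi> j)) (Suc k)) = Q y * \<psi> (y i)"
    for y
  proof -
    have "Q (\<lambda>j\<in>{1..n}. y (\<pi> j)) = Q y"
      by (rule Q_local) (use i in \<open>auto simp: \<pi>_def transpose_def\<close>)
    then show ?thesis using i by (simp add: \<pi>_def)
  qed
  ultimately show ?thesis by simp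
qed

lemma integral_mu_n_coord_avg_exchange:
  fixes Q :: "(nat \<Rightarrow> 'a) \<Rightarrow> real"
  assumes Q: "Q \<in> borel_measurable (Epow n)" "\<And>y. \<bar>Q y\<bar> \<le> BQ"
    and Q_local: "\<And>y y'. (\<And>j. j \<in> {1..k} \<Longrightarrow> y j = y' j) \<Longrightarrow> Q y = Q y'"
    and \<psi>: "bdd_borel \<psi>" "\<And>x. \<bar>\<psi> x\<bar> \<le> B\<psi>"
    and "k < n"
  shows "\<bar>(\<integral>y. Q y * \<psi> (y (Suc k)) \<partial>mu_n \<mu> S n) - (\<integral>y. Q y * coord_avg \<psi> n y \<partial>mu_n \<mu> S n)\<bar>
    \<le> 2 * k * BQ * B\<psi> / n"
proof -
  interpret M: prob_space "mu_n \<mu> S n" by (rule prob_space_mu_n)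
  define I where "I i = (\<integral>y. Q y * \<psi> (y i) \<partial>mu_n \<mu> S n)" for i
  have "0 \<le> BQ" using Q(2) order_trans[OF abs_ge_zero] by blast
  have meas: "(\<lambda>y. Q y * \<psi> (y i)) \<in> borel_measurable (Epow n)" if "i \<in> {1..n}" for i
    using that Q(1)
    by (intro borel_measurable_times measurable_component_Epow bdd_borel_measurable \<psi>(1))
  have bound: "\<bar>Q y * \<psi> (y i)\<bar> \<le> BQ * B\<psi>" for y i
    unfolding abs_mult using Q(2) \<psi>(2) \<open>0 \<le> BQ\<close> by (intro mult_mono) auto
  have I_bound: "\<bar>I i\<bar> \<le> BQ * B\<psi>" if "i \<in> {1..n}" for i
    unfolding I_def using meas[OF that] bound
    by (intro M.abs_integral_le) (simp_all add: measurable_mu_n_iff)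
  have I_eq: "I i = I (Suc k)" if "i \<in> {Suc k..n}" for i
    unfolding I_def using Q_local by (rule integral_mu_n_swap_coordinate[OF Q _ \<psi> that])
  have "n * (\<integral>y. Q y * coord_avg \<psi> n y \<partial>mu_n \<mu> S n) = (\<integral>y. (\<Sum>i\<in>{1..n}. Q y * \<psi> (y i)) \<partial>mu_n \<mu> S n)"
    using \<open>k < n\<close> by (simp add: coord_avg_def sum_distrib_left)
  also have "\<dots> = (\<Sum>i\<in>{1..n}. I i)"
    unfolding I_def using meas bound
    by (intro Bochner_Integration.integral_sum M.integrable_bounded)
      (auto simp: measurable_mu_n_iff)
  also have "\<dots> = (\<Sum>i\<in>{1..k}. I i) + (n - k) * I (Suc k)"
  proof -
    have "{1..n} = {1..k} \<union> {Suc k..n}" using \<open>k < n\<close> by auto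
    moreover have "(\<Sum>i\<in>{Suc k..n}. I i) = (\<Sum>i\<in>{Suc k..n}. I (Suc k))"
      by (rule sum.cong[OF refl I_eq])
    ultimately show ?thesis using \<open>k < n\<close> by (simp add: sum.union_disjoint of_nat_diff)
  qed
  finally have "I (Suc k) - (\<integral>y. Q y * coord_avg \<psi> n y \<partial>mu_n \<mu> S n)
      = (k * I (Suc k) - (\<Sum>i\<in>{1..k}. I i)) / n"
    using \<open>k < n\<close> by (simp add: field_simps)
  moreover have "\<bar>k * I (Suc k) - (\<Sum>i\<in>{1..k}. I i)\<bar> \<le> 2 * k * BQ * B\<psi>"
  proof -
    have "\<bar>k * I (Suc k)\<bar> \<le> k * (BQ * B\<psi>)"
      unfolding abs_mult using I_bound[of "Suc k"] \<open>k < n\<close> by (simp add: mult_left_mono)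
    moreover have "\<bar>\<Sum>i\<in>{1..k}. I i\<bar> \<le> (\<Sum>i\<in>{1..k}. BQ * B\<psi>)"
      using I_bound \<open>k < n\<close> by (intro order_trans[OF sum_abs] sum_mono) auto
    ultimately show ?thesis by simp
  qed
  ultimately show ?thesis
    unfolding I_def using \<open>k < n\<close> by (simp add: abs_divide divide_right_mono)
qed

lemma integral_mu_n_coord_avg_approx:
  fixes Q :: "(nat \<Rightarrow> 'a) \<Rightarrow> real"
  assumes Q: "Q \<in> borel_measurable (Epow n)" "\<And>y. \<bar>Q y\<bar> \<le> BQ" and \<psi>: "bdd_borel \<psi>"
  shows "\<bar>(\<integral>y. Q y * coord_avg \<psi> n y \<partial>mu_n \<mu> S n) - c * (\<integral>y. Q y \<partial>mu_n \<mu> S n)\<bar>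
    \<le> BQ * (\<integral>x. \<bar>birkhoff_avg \<psi> n x - c\<bar> \<partial>\<mu>)"
proof -
  interpret M: prob_space "mu_n \<mu> S n" by (rule prob_space_mu_n)
  obtain B\<psi> where B\<psi>: "\<And>x. \<bar>\<psi> x\<bar> \<le> B\<psi>" using bdd_borelE[OF \<psi>] by blast
  have avg: "coord_avg \<psi> n \<in> borel_measurable (mu_n \<mu> S n)"
    unfolding coord_avg_def[abs_def] measurable_mu_n_iff
    using measurable_component_Epow[OF _ bdd_borel_measurable[OF \<psi>]]
    by (intro borel_measurable_divide borel_measurable_sum) auto
  have avg_bound: "\<bar>coord_avg \<psi> n y\<bar> \<le> B\<psi>" for y
    unfolding coord_avg_def using B\<psi> by (rule abs_mean_le)
  have Qm: "Q \<in> borel_measurable (mu_n \<mu> S n)" using Q(1) by (simp add: measurable_mu_n_iff)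
  have "0 \<le> BQ" using Q(2) order_trans[OF abs_ge_zero] by blast
  have "\<bar>Q y * coord_avg \<psi> n y\<bar> \<le> BQ * B\<psi>" for y
    unfolding abs_mult using Q(2) avg_bound \<open>0 \<le> BQ\<close> by (intro mult_mono) auto
  then have "integrable (mu_n \<mu> S n) Q" "integrable (mu_n \<mu> S n) (\<lambda>y. Q y * coord_avg \<psi> n y)"
    using Qm avg Q(2) by (auto intro: M.integrable_bounded borel_measurable_times)
  then have "(\<integral>y. Q y * coord_avg \<psi> n y \<partial>mu_n \<mu> S n) - c * (\<integral>y. Q y \<partial>mu_n \<mu> S n)
      = (\<integral>y. Q y * (coord_avg \<psi> n y - c) \<partial>mu_n \<mu> S n)"
    by (simp add: right_diff_distrib mult.commute)
  also have "\<bar>\<dots>\<bar> \<le> BQ * (\<integral>y. \<bar>coord_avg \<psi> n y - c\<bar> \<partial>mu_n \<mu> S n)"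
  proof (rule M.abs_integral_mult_le[OF Qm _ Q(2)])
    show "(\<lambda>y. coord_avg \<psi> n y - c) \<in> borel_measurable (mu_n \<mu> S n)" using avg by simp
    show "\<bar>coord_avg \<psi> n y - c\<bar> \<le> B\<psi> + \<bar>c\<bar>" for y
      using avg_bound[of y] abs_triangle_ineq4[of "coord_avg \<psi> n y" c] by linarith
  qed
  finally show ?thesis unfolding integral_mu_n_coord_avg_dist[OF \<psi>] .
qed

lemma abs_integral_mu_n_prod_Suc_le:
  fixes \<phi> :: "nat \<Rightarrow> 'a \<Rightarrow> real"
  assumes \<phi>: "\<And>j. bdd_borel (\<phi> j)" and B: "\<And>j x. \<bar>\<phi> j x\<bar> \<le> B j" and "k < n"
  shows "\<bar>(\<integral>y. (\<Prod>j\<in>{1..Suc k}. \<phi> j (y j)) \<partial>mu_n \<mu> S n)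
      - c * (\<integral>y. (\<Prod>j\<in>{1..k}. \<phi> j (y j)) \<partial>mu_n \<mu> S n)\<bar>
    \<le> 2 * real k * (\<Prod>j\<in>{1..k}. B j) * B (Suc k) / n
      + (\<Prod>j\<in>{1..k}. B j) * (\<integral>x. \<bar>birkhoff_avg (\<phi> (Suc k)) n x - c\<bar> \<partial>\<mu>)"
proof -
  define Q where "Q y = (\<Prod>j\<in>{1..k}. \<phi> j (y j))" for y :: "nat \<Rightarrow> 'a"
  have Q_meas: "Q \<in> borel_measurable (Epow n)"
    unfolding Q_def[abs_def] using \<open>k < n\<close>
    by (intro measurable_prod_component_Epow[where \<phi>=\<phi>, OF _ \<phi>]) simp
  have Q_bound: "\<bar>Q y\<bar> \<le> (\<Prod>j\<in>{1..k}. B j)" for y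
    unfolding Q_def abs_prod by (intro prod_mono) (auto intro: B)
  have Q_local: "Q y = Q y'" if "\<And>j. j \<in> {1..k} \<Longrightarrow> y j = y' j" for y y'
    unfolding Q_def using that by (intro prod.cong) auto
  have prod_Suc: "(\<lambda>y. \<Prod>j\<in>{1..Suc k}. \<phi> j (y j)) = (\<lambda>y. Q y * \<phi> (Suc k) (y (Suc k)))"
    unfolding Q_def by (simp add: prod.nat_ivl_Suc' mult.commute)
  have "\<bar>(\<integral>y. Q y * \<phi> (Suc k) (y (Suc k)) \<partial>mu_n \<mu> S n)
      - (\<integral>y. Q y * coord_avg (\<phi> (Suc k)) n y \<partial>mu_n \<mu> S n)\<bar>
    \<le> 2 * real k * (\<Prod>j\<in>{1..k}. B j) * B (Suc k) / n"
    using Q_local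
    by (rule integral_mu_n_coord_avg_exchange[OF Q_meas Q_bound _ \<phi>[of "Suc k"] B \<open>k < n\<close>])
  moreover note integral_mu_n_coord_avg_approx[where c=c, OF Q_meas Q_bound \<phi>[of "Suc k"]]
  ultimately show ?thesis
    unfolding prod_Suc Q_def[symmetric] by linarith
qed

end

section \<open>Mixing and asymptotic stationarity\<close>

locale mixing_system = borel_dynamical_system \<mu> S for \<mu> :: "'a::topological_space measure" and S +
  fixes \<nu> :: "'a measure" and P :: "'a set set"
  assumes Int_stable_P: "Int_stable P"
    and P_borel: "P \<subseteq> sets borel"
    and sigma_sets_P: "sigma_sets UNIV P = sets borel"
    and mixing: "\<forall>A\<in>P. \<forall>B\<in>P.
           (\<lambda>k. SUP i\<in>{1::nat..}.
              \<bar>measure \<mu> ((S ^^ i) -` A \<inter> (S ^^ k) -` ((S ^^ i) -` B))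
               - measure \<mu> ((S ^^ i) -` A) * measure \<mu> ((S ^^ k) -` ((S ^^ i) -` B))\<bar>)
           \<longlonglongrightarrow> 0"
    and asymptotically_stationary: "asymptotically_stationary \<mu> S \<nu>"
begin

lemma sets_nu: "sets \<nu> = sets borel"
  using asymptotically_stationary unfolding asymptotically_stationary_def by simp

lemma emeasure_vimage_tendsto:
  "A \<in> sets borel \<Longrightarrow> (\<lambda>k. emeasure \<mu> ((S ^^ k) -` A)) \<longlonglongrightarrow> emeasure \<nu> A"
  using asymptotically_stationary unfolding asymptotically_stationary_def by simp

sublocale nu: prob_space \<nu>
proof
  have "(\<lambda>k. emeasure \<mu> ((S ^^ k) -` UNIV)) \<longlonglongrightarrow> emeasure \<nu> UNIV"
    by (rule emeasure_vimage_tendsto) simp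
  then have "emeasure \<nu> UNIV = 1"
    using emeasure_space_1 space_eq_UNIV LIMSEQ_unique[OF _ tendsto_const] by simp
  then show "emeasure \<nu> (space \<nu>) = 1"
    using sets_eq_imp_space_eq[OF sets_nu] by simp
qed

lemma measure_vimage_tendsto:
  assumes "A \<in> sets borel"
  shows "(\<lambda>k. measure \<mu> ((S ^^ k) -` A)) \<longlonglongrightarrow> measure \<nu> A"
  unfolding measure_def using emeasure_vimage_tendsto[OF assms] nu.emeasure_eq_measure
  by (intro tendsto_enn2real) auto

lemma mean_at_tendsto: "bdd_borel f \<Longrightarrow> mean_at f \<longlonglongrightarrow> integral\<^sup>L \<nu> f"
proof (rule tendsto_bdd_borel_functional[OF mean_at_functional])
  show "bdd_borel_functional 1 (integral\<^sup>L \<nu>)"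
  proof (rule bdd_borel_functionalI)
    have "integrable \<nu> f" if "bdd_borel f" for f
      using that measurable_cong_sets[OF sets_nu refl]
      by (metis bdd_borelE bdd_borel_measurable nu.integrable_bounded)
    then show "integral\<^sup>L \<nu> (\<lambda>x. c * f x + g x) = c * integral\<^sup>L \<nu> f + integral\<^sup>L \<nu> g"
      if "bdd_borel f" "bdd_borel g" for f g c
      using that by simp
    show "\<bar>integral\<^sup>L \<nu> f\<bar> \<le> 1 * B" if "bdd_borel f" "\<And>x. \<bar>f x\<bar> \<le> B" for f B
    proof -
      have "f \<in> borel_measurable \<nu>"
        using bdd_borel_measurable[OF that(1)] measurable_cong_sets[OF sets_nu refl] by blast
      then show ?thesis using nu.abs_integral_le that(2) by simp
    qed
  qed
  show "(\<lambda>n. mean_at (indicator A) n) \<longlonglongrightarrow> integral\<^sup>L \<nu> (indicator A)" if "A \<in> sets borel" for A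
    unfolding mean_at_indicator using measure_vimage_tendsto[OF that] that sets_nu by simp
qed

lemma cesaro_prob_tendsto: "A \<in> sets borel \<Longrightarrow> cesaro_prob A \<longlonglongrightarrow> measure \<nu> A"
  unfolding cesaro_prob_def[abs_def] by (rule cesaro_mean_tendsto[OF measure_vimage_tendsto])

lemma indicator_functional_tendsto_zero:
  assumes T: "\<And>n. bdd_borel_functional D (T n)"
    and basic: "\<And>A. A \<in> P \<Longrightarrow> (\<lambda>n. T n (indicator A)) \<longlonglongrightarrow> 0"
    and UNIV: "\<And>n. T n (indicator UNIV) = 0"
    and bound: "\<And>A n. A \<in> sets borel \<Longrightarrow> \<bar>T n (indicator A)\<bar> \<le> C * cesaro_prob A n"
    and "A \<in> sets borel"
  shows "(\<lambda>n. T n (indicator A)) \<longlonglongrightarrow> 0"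
proof (rule tendsto_zero_sigma_sets[where \<Omega>=UNIV and \<nu>=\<nu> and P=P and m=cesaro_prob])
  show "sets \<nu> = sigma_sets UNIV P" using sets_nu sigma_sets_P by simp
  show "T n (indicator (UNIV - A)) = T n (indicator UNIV) - T n (indicator A)"
    if "A \<in> sets \<nu>" for A n
    using bdd_borel_functional_indicator_Diff[OF T] that sets_nu by simp
  show "T n (indicator (A \<union> B)) = T n (indicator A) + T n (indicator B)"
    if "A \<in> sets \<nu>" "B \<in> sets \<nu>" "A \<inter> B = {}" for A B n
    using bdd_borel_functional_indicator_Un[OF T] that sets_nu by simp
qed (use assms Int_stable_P sets_nu cesaro_prob_tendsto in auto)

lemma avg_cov_indicator_tendsto_zero_pi:
  assumes "A \<in> P" "B \<in> P"
  shows "avg_cov (indicator A) (indicator B) \<longlonglongrightarrow> 0"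
proof -
  define h where "h i k = \<bar>measure \<mu> ((S ^^ i) -` A \<inter> (S ^^ k) -` ((S ^^ i) -` B))
    - measure \<mu> ((S ^^ i) -` A) * measure \<mu> ((S ^^ k) -` ((S ^^ i) -` B))\<bar>" for i k :: nat
  define \<delta> where "\<delta> k = (SUP i\<in>{1::nat..}. h i k)" for k
  have "\<delta> \<longlonglongrightarrow> 0" using mixing assms unfolding \<delta>_def h_def by blast
  have "\<bar>x - y\<bar> \<le> 1" if "0 \<le> x" "x \<le> 1" "0 \<le> y" "y \<le> 1" for x y :: real
    using that by (simp add: abs_le_iff)
  then have "h i k \<le> 1" for i k
    unfolding h_def by (simp add: mult_le_one)
  then have h_le: "h i k \<le> \<delta> k" if "1 \<le> i" for i k
    unfolding \<delta>_def using that by (intro cSUP_upper bdd_aboveI[of _ 1]) auto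
  have "0 \<le> \<delta> k" for k using h_le[of 1 k] unfolding h_def by simp
  have "\<bar>avg_cov (indicator A) (indicator B) n\<bar> \<le> (\<Sum>k\<in>{1..n}. \<delta> k) / n" for n
  proof -
    have "\<bar>avg_cov (indicator A) (indicator B) n\<bar>
        \<le> (\<Sum>a\<in>{1..n}. \<Sum>b\<in>{1..n}. if a < b then \<delta> (b - a) else 0) / (real n)\<^sup>2"
      by (rule abs_avg_cov_le) (simp add: cov_indicator_eq h_le flip: h_def)
    also have "\<dots> \<le> n * (\<Sum>k\<in>{1..n}. \<delta> k) / (real n)\<^sup>2"
      using \<open>\<And>k. 0 \<le> \<delta> k\<close> by (intro divide_right_mono sum_upper_triangle_shift_le) auto
    also have "\<dots> = (\<Sum>k\<in>{1..n}. \<delta> k) / n"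
      by (simp add: power2_eq_square)
    finally show ?thesis .
  qed
  then have "\<forall>\<^sub>F n in sequentially.
      norm (avg_cov (indicator A) (indicator B) n) \<le> (\<Sum>k\<in>{1..n}. \<delta> k) / n"
    by simp
  then show ?thesis by (rule Lim_null_comparison[OF _ cesaro_mean_tendsto[OF \<open>\<delta> \<longlonglongrightarrow> 0\<close>]])
qed

lemma avg_cov_indicator_tendsto_zero:
  assumes "A \<in> sets borel" "B \<in> sets borel"
  shows "avg_cov (indicator A) (indicator B) \<longlonglongrightarrow> 0"
proof -
  have ind_bound: "\<bar>indicator C x :: real\<bar> \<le> 1" for C x by (simp add: indicator_def)
  have left: "avg_cov (indicator A') (indicator B') \<longlonglongrightarrow> 0" if "A' \<in> sets borel" "B' \<in> P" for A' B'
  proof (rule indicator_functional_tendsto_zero[where T="\<lambda>n f. avg_cov f (indicator B') n"])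
    have B': "B' \<in> sets borel" using that P_borel by auto
    show "bdd_borel_functional (2 * 1) (\<lambda>f. avg_cov f (indicator B') n)" for n
      by (rule avg_cov_functional_left[OF bdd_borel_indicator[OF B'] ind_bound])
    show "(\<lambda>n. avg_cov (indicator A) (indicator B') n) \<longlonglongrightarrow> 0" if "A \<in> P" for A
      using avg_cov_indicator_tendsto_zero_pi[OF that \<open>B' \<in> P\<close>] by simp
    show "\<bar>avg_cov (indicator A) (indicator B') n\<bar> \<le> 2 * cesaro_prob A n"
      if "A \<in> sets borel" for A n
      using abs_avg_cov_indicator_le(1)[OF that bdd_borel_indicator[OF B'] ind_bound] by simp
  qed (simp_all add: avg_cov_indicator_UNIV[unfolded indicator_UNIV] that)
  show ?thesis
  proof (rule indicator_functional_tendsto_zero[where T="\<lambda>n g. avg_cov (indicator A) g n"])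
    show "bdd_borel_functional (2 * 1) (\<lambda>g. avg_cov (indicator A) g n)" for n
      by (rule avg_cov_functional_right[OF bdd_borel_indicator[OF assms(1)] ind_bound])
    show "\<bar>avg_cov (indicator A) (indicator B') n\<bar> \<le> 2 * cesaro_prob B' n"
      if "B' \<in> sets borel" for B' n
      using abs_avg_cov_indicator_le(2)[OF that bdd_borel_indicator[OF assms(1)] ind_bound] by simp
  qed (simp_all add: avg_cov_indicator_UNIV[unfolded indicator_UNIV] assms left)
qed

lemma avg_cov_tendsto_zero:
  assumes f: "bdd_borel f" and g: "bdd_borel g"
  shows "avg_cov f g \<longlonglongrightarrow> 0"
proof -
  obtain Bf where Bf: "0 \<le> Bf" "\<And>x. \<bar>f x\<bar> \<le> Bf" using bdd_borelE[OF f] by blast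
  have ind_bound: "\<bar>indicator C x :: real\<bar> \<le> 1" for C x by (simp add: indicator_def)
  have "(\<lambda>n. avg_cov f (indicator B) n) \<longlonglongrightarrow> 0" if "B \<in> sets borel" for B
    using tendsto_bdd_borel_functional[OF avg_cov_functional_left[OF bdd_borel_indicator[OF that]
        ind_bound] bdd_borel_functional_zero _ f]
    by (simp add: avg_cov_indicator_tendsto_zero that)
  then show ?thesis
    using tendsto_bdd_borel_functional[OF avg_cov_functional_right[OF f Bf(2)]
        bdd_borel_functional_zero _ g] Bf(1)
    by simp
qed

lemma birkhoff_avg_L2_tendsto:
  assumes f: "bdd_borel f"
  shows "(\<lambda>n. \<integral>x. (birkhoff_avg f n x - integral\<^sup>L \<nu> f)\<^sup>2 \<partial>\<mu>) \<longlonglongrightarrow> 0"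
proof -
  define c where "c = integral\<^sup>L \<nu> f"
  define m where "m n = (\<Sum>a\<in>{1..n}. mean_at f a) / n" for n
  obtain B where B: "0 \<le> B" "\<And>x. \<bar>f x\<bar> \<le> B" using bdd_borelE[OF f] by blast
  have "\<bar>(birkhoff_avg f n x)\<^sup>2\<bar> \<le> B\<^sup>2" for n x
  proof -
    have "\<bar>birkhoff_avg f n x\<bar> \<le> \<bar>B\<bar>" using abs_birkhoff_avg_le[OF B(2)] B(1) by simp
    then show ?thesis by (simp add: abs_le_square_iff)
  qed
  then have "integrable \<mu> (birkhoff_avg f n)" "integrable \<mu> (\<lambda>x. (birkhoff_avg f n x)\<^sup>2)" for n
    using birkhoff_avg_measurable[OF f] abs_birkhoff_avg_le[OF B(2)]
    by (auto intro!: integrable_bounded)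
  then have eq: "(\<integral>x. (birkhoff_avg f n x - c)\<^sup>2 \<partial>\<mu>)
      = 2 * avg_cov f f n + (\<Sum>a\<in>{1..n}. cov f f a a) / (real n)\<^sup>2 + (m n)\<^sup>2 - 2 * c * m n + c\<^sup>2"
    for n
    unfolding power2_diff using integral_birkhoff_avg_square[OF f, of n] integral_birkhoff_avg[OF f]
    by (simp add: prob_space m_def)
  have diag: "(\<lambda>n. (\<Sum>a\<in>{1..n}. cov f f a a) / (real n)\<^sup>2) \<longlonglongrightarrow> 0"
  proof (rule Lim_null_comparison)
    show "\<forall>\<^sub>F n in sequentially. norm ((\<Sum>a\<in>{1..n}. cov f f a a) / (real n)\<^sup>2) \<le> 2 * B * B / n"
    proof (rule eventually_sequentiallyI[of 1])
      fix n :: nat assume "1 \<le> n"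
      have "\<bar>\<Sum>a\<in>{1..n}. cov f f a a\<bar> \<le> (\<Sum>a\<in>{1..n}. 2 * B * B)"
        by (intro order_trans[OF sum_abs] sum_mono abs_cov_le f B(2))
      then show "norm ((\<Sum>a\<in>{1..n}. cov f f a a) / (real n)\<^sup>2) \<le> 2 * B * B / n"
        using \<open>1 \<le> n\<close> by (simp add: abs_divide power2_eq_square field_simps)
    qed
  qed (rule lim_const_over_n)
  have "m \<longlonglongrightarrow> c"
    unfolding m_def[abs_def] c_def by (rule cesaro_mean_tendsto[OF mean_at_tendsto[OF f]])
  then have "(\<lambda>n. 2 * avg_cov f f n + (\<Sum>a\<in>{1..n}. cov f f a a) / (real n)\<^sup>2 + (m n)\<^sup>2
      - 2 * c * m n + c\<^sup>2) \<longlonglongrightarrow> 2 * 0 + 0 + c\<^sup>2 - 2 * c * c + c\<^sup>2"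
    using avg_cov_tendsto_zero[OF f f] diag by (intro tendsto_intros)
  then show ?thesis unfolding eq c_def[symmetric] by (simp add: power2_eq_square)
qed

lemma birkhoff_avg_L1_tendsto:
  assumes f: "bdd_borel f"
  shows "(\<lambda>n. \<integral>x. \<bar>birkhoff_avg f n x - integral\<^sup>L \<nu> f\<bar> \<partial>\<mu>) \<longlonglongrightarrow> 0"
proof (rule Lim_null_comparison)
  obtain B where B: "\<And>x. \<bar>f x\<bar> \<le> B" using bdd_borelE[OF f] by blast
  have "\<bar>birkhoff_avg f n x - integral\<^sup>L \<nu> f\<bar> \<le> B + \<bar>integral\<^sup>L \<nu> f\<bar>" for n x
    using abs_birkhoff_avg_le[of f B n x, OF B] by linarith
  then have "(\<integral>x. \<bar>birkhoff_avg f n x - integral\<^sup>L \<nu> f\<bar> \<partial>\<mu>)\<^sup>2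
      \<le> (\<integral>x. (birkhoff_avg f n x - integral\<^sup>L \<nu> f)\<^sup>2 \<partial>\<mu>)" for n
    using birkhoff_avg_measurable[OF f] by (intro integral_abs_square_le) auto
  then show "\<forall>\<^sub>F n in sequentially. norm (\<integral>x. \<bar>birkhoff_avg f n x - integral\<^sup>L \<nu> f\<bar> \<partial>\<mu>)
      \<le> sqrt (\<integral>x. (birkhoff_avg f n x - integral\<^sup>L \<nu> f)\<^sup>2 \<partial>\<mu>)"
    by (intro always_eventually allI) (simp add: real_le_rsqrt)
  show "(\<lambda>n. sqrt (\<integral>x. (birkhoff_avg f n x - integral\<^sup>L \<nu> f)\<^sup>2 \<partial>\<mu>)) \<longlonglongrightarrow> 0"
    using tendsto_real_sqrt[OF birkhoff_avg_L2_tendsto[OF f]] by simp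
qed

lemma mu_n_product_tendsto:
  fixes \<phi> :: "nat \<Rightarrow> 'a \<Rightarrow> real"
  assumes \<phi>: "\<And>j. bdd_borel (\<phi> j)"
  shows "(\<lambda>n. \<integral>y. (\<Prod>j\<in>{1..k}. \<phi> j (y j)) \<partial>mu_n \<mu> S n) \<longlonglongrightarrow> (\<Prod>j\<in>{1..k}. integral\<^sup>L \<nu> (\<phi> j))"
proof (induction k)
  case 0
  show ?case using prob_space.prob_space[OF prob_space_mu_n] by simp
next
  case (Suc k)
  obtain B where B: "\<And>j x. \<bar>\<phi> j x\<bar> \<le> B j" using bdd_borel_bounds[where \<phi>=\<phi>, OF \<phi>] by blast
  define c where "c = integral\<^sup>L \<nu> (\<phi> (Suc k))"
  define I where "I k n = (\<integral>y. (\<Prod>j\<in>{1..k}. \<phi> j (y j)) \<partial>mu_n \<mu> S n)" for k n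
  define R where "R n = 2 * real k * (\<Prod>j\<in>{1..k}. B j) * B (Suc k) / n
    + (\<Prod>j\<in>{1..k}. B j) * (\<integral>x. \<bar>birkhoff_avg (\<phi> (Suc k)) n x - c\<bar> \<partial>\<mu>)" for n
  have "(\<lambda>n. \<integral>x. \<bar>birkhoff_avg (\<phi> (Suc k)) n x - c\<bar> \<partial>\<mu>) \<longlonglongrightarrow> 0"
    unfolding c_def by (rule birkhoff_avg_L1_tendsto[OF \<phi>])
  then have "R \<longlonglongrightarrow> 0"
    unfolding R_def[abs_def] using tendsto_add[OF lim_const_over_n tendsto_mult_right_zero] by simp
  moreover have "\<forall>\<^sub>F n in sequentially. norm (I (Suc k) n - c * I k n) \<le> R n"
    unfolding I_def R_def using abs_integral_mu_n_prod_Suc_le[where \<phi>=\<phi> and B=B and c=c, OF \<phi> B]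
    by (intro eventually_sequentiallyI[of "Suc k"]) simp
  ultimately have "(\<lambda>n. I (Suc k) n - c * I k n) \<longlonglongrightarrow> 0"
    by (rule Lim_null_comparison[rotated])
  moreover have "I k \<longlonglongrightarrow> (\<Prod>j\<in>{1..k}. integral\<^sup>L \<nu> (\<phi> j))"
    unfolding I_def[abs_def] by (rule Suc.IH)
  ultimately have "(\<lambda>n. (I (Suc k) n - c * I k n) + c * I k n)
      \<longlonglongrightarrow> 0 + c * (\<Prod>j\<in>{1..k}. integral\<^sup>L \<nu> (\<phi> j))"
    by (intro tendsto_intros)
  moreover have limit_Suc: "(\<Prod>j\<in>{1..Suc k}. integral\<^sup>L \<nu> (\<phi> j))
      = c * (\<Prod>j\<in>{1..k}. integral\<^sup>L \<nu> (\<phi> j))"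
    unfolding c_def by (rule prod.nat_ivl_Suc') simp
  ultimately show ?case unfolding limit_Suc I_def[abs_def] by simp
qed

end

theorem corollary2p3:
  fixes \<mu> \<nu> :: "'a::{metric_space, second_countable_topology} measure"
    and S :: "'a \<Rightarrow> 'a"
    and P :: "'a set set"
  assumes "prob_space \<mu>"
    and "sets \<mu> = sets borel"
    and "S \<in> borel_measurable borel"
    and "Int_stable P"
    and "P \<subseteq> sets borel"
    and "sigma_sets UNIV P = sets borel"
    and "\<forall>A\<in>P. \<forall>B\<in>P.
           (\<lambda>k. SUP i\<in>{1::nat..}.
              \<bar>measure \<mu> ((S ^^ i) -` A \<inter> (S ^^ k) -` ((S ^^ i) -` B))
               - measure \<mu> ((S ^^ i) -` A) * measure \<mu> ((S ^^ k) -` ((S ^^ i) -` B))\<bar>)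
           \<longlonglongrightarrow> 0"
    and "asymptotically_stationary \<mu> S \<nu>"
  shows "chaotic (mu_n \<mu> S) \<nu>"
proof -
  have "mixing_system \<mu> S \<nu> P"
    unfolding mixing_system_def mixing_system_axioms_def borel_dynamical_system_def
      borel_dynamical_system_axioms_def
    using assms by blast
  then interpret mixing_system \<mu> S \<nu> P .
  show ?thesis
    unfolding chaotic_def
    using symmetric_mu_n mu_n_product_tendsto bdd_borel_if_bcont by blast
qed

end
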